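(* Let $K\ge2$, let $\mathbf{p}$ be a probability vector on $[K]$ with all $p_k>0$, and let $\mathbf{W},\mathbf{W}'$ be $K\times K$ invertible row-stochastic matrices. Fix a projection map $\mathrm{Proj}_{\mathbb{P}}$ as in the context, and let $\mathscr{L}^{(n)}$ denote any one of the three loss metrics defined in the context. Assume that (1) in the case of the $f$-divergence loss, $f$ is strictly convex at $x=1$; (2) $\mathbf{W}'$ is not a permutation matrix. Then for all sufficiently large $n$, $$\mathscr{L}^{(n)}(\mathbf{p},\mathbf{W}\mathbf{W}')>\mathscr{L}^{(n)}(\mathbf{p},\mathbf{W}).$$
   Context: For a $K\times K$ invertible row-stochastic channel $\mathbf{V}$: $X_1,\dots,X_n$ are i.i.d. with law $\mathbf{p}$, each passed independently through $\mathbf{V}$ ($\Pr\{Y_i=\ell\mid X_i=k\}=V_{k,\ell}$), giving $\mathbf{y}_n$ with empirical distribution $\mathbf{t}(\mathbf{y}_n)$; the estimator is $\hat{\mathbf{p}}_n=\mathrm{Proj}_{\mathbb{P}}(\mathbf{t}(\mathbf{y}_n)\mathbf{V}^{-1})$, where $\mathbb{P}$ is the probability simplex and $\mathrm{Proj}_{\mathbb{P}}$ maps vectors with entries summing to one into $\mathbb{P}$ with $\mathrm{Proj}_{\mathbb{P}}(\mathbf{v})=\mathbf{v}$ for $\mathbf{v}\in\mathbb{P}$. The losses are $\mathscr{L}^{(n)}_{f\text{-DIV}}(\mathbf{p},\mathbf{V})=\mathbb{E}[\sum_k p_kf(\hat p_{n,k}/p_k)]$ for a convex $f$ with $f(1)=0$;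 $\mathscr{L}^{(n)}_{\rm MSE}(\mathbf{p},\mathbf{V})=\mathbb{E}\Vert\hat{\mathbf{p}}_n-\mathbf{p}\Vert_2^2$; $\mathscr{L}^{(n)}_{\rm TV}(\mathbf{p},\mathbf{V})=\mathbb{E}\Vert\hat{\mathbf{p}}_n-\mathbf{p}\Vert_1$. The theorem compares $\mathbf{V}=\mathbf{W}$ with $\mathbf{V}=\mathbf{W}\mathbf{W}'$ (the latter equivalent to passing the outputs of $\mathbf{W}$ through $\mathbf{W}'$). "$f$ strictly convex at $1$" means $f(\lambda(1-\epsilon)+(1-\lambda)(1+\epsilon'))<\lambda f(1-\epsilon)+(1-\lambda)f(1+\epsilon')$ for all $\epsilon,\epsilon'>0$ and $\lambda\in(0,1)$. *)

theory Defs
  imports "HOL-Analysis.Analysis"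
begin

definition prob_simplex :: "(real ^ 'k::finite) set" where
  "prob_simplex = {v. (\<forall>k. 0 \<le> v $ k) \<and> (\<Sum>k\<in>UNIV. v $ k) = 1}"

definition row_stochastic :: "real ^ 'k::finite ^ 'k \<Rightarrow> bool" where
  "row_stochastic V \<longleftrightarrow> (\<forall>i j. 0 \<le> V $ i $ j) \<and> (\<forall>i. (\<Sum>j\<in>UNIV. V $ i $ j) = 1)"

definition permutation_matrix :: "real ^ 'k::finite ^ 'k \<Rightarrow> bool" where
  "permutation_matrix M \<longleftrightarrow>
     (\<exists>\<sigma>. \<sigma> permutes (UNIV :: 'k set) \<and> M = (\<chi> i j. if \<sigma> i = j then 1 else 0))"

definition is_simplex_proj :: "(real ^ 'k::finite \<Rightarrow> real ^ 'k) \<Rightarrow> bool" where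
  "is_simplex_proj Proj \<longleftrightarrow>
     (\<forall>v. (\<Sum>k\<in>UNIV. v $ k) = 1 \<longrightarrow> Proj v \<in> prob_simplex) \<and>
     (\<forall>v\<in>prob_simplex. Proj v = v)"

text \<open>Strict convexity at 1 (with 1 - eps kept in the domain [0,inf) of f).\<close>
definition strictly_convex_at_one :: "(real \<Rightarrow> real) \<Rightarrow> bool" where
  "strictly_convex_at_one f \<longleftrightarrow>
     (\<forall>e e' l. 0 < e \<and> e \<le> 1 \<and> 0 < e' \<and> 0 < l \<and> l < 1 \<longrightarrow>
        f (l * (1 - e) + (1 - l) * (1 + e')) < l * f (1 - e) + (1 - l) * f (1 + e'))"

definition empirical :: "'k::finite list \<Rightarrow> real ^ 'k" where
  "empirical ys = (\<chi> l. real (count_list ys l) / real (length ys))"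

text \<open>Probability of the output sequence ys when X_i ~ p i.i.d. passed through V:
  the Y_i are i.i.d. with law p V.\<close>
definition seq_prob :: "real ^ 'k::finite \<Rightarrow> real ^ 'k ^ 'k \<Rightarrow> 'k list \<Rightarrow> real" where
  "seq_prob p V ys = prod_list (map (\<lambda>y. (p v* V) $ y) ys)"

definition estimator :: "(real ^ 'k::finite \<Rightarrow> real ^ 'k) \<Rightarrow> real ^ 'k ^ 'k \<Rightarrow> 'k list \<Rightarrow> real ^ 'k" where
  "estimator Proj V ys = Proj (empirical ys v* matrix_inv V)"

definition expected_loss ::
  "(real ^ 'k::finite \<Rightarrow> real ^ 'k) \<Rightarrow> (real ^ 'k \<Rightarrow> real ^ 'k \<Rightarrow> real) \<Rightarrow> nat
     \<Rightarrow> real ^ 'k \<Rightarrow> real ^ 'k ^ 'k \<Rightarrow> real" where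
  "expected_loss Proj g n p V =
     (\<Sum>ys\<in>{ys :: 'k list. length ys = n}. seq_prob p V ys * g (estimator Proj V ys) p)"

definition fdiv_loss :: "(real \<Rightarrow> real) \<Rightarrow> real ^ 'k::finite \<Rightarrow> real ^ 'k \<Rightarrow> real" where
  "fdiv_loss f q p = (\<Sum>k\<in>UNIV. p $ k * f (q $ k / p $ k))"

definition mse_loss :: "real ^ 'k::finite \<Rightarrow> real ^ 'k \<Rightarrow> real" where
  "mse_loss q p = (\<Sum>k\<in>UNIV. (q $ k - p $ k)^2)"

definition tv_loss :: "real ^ 'k::finite \<Rightarrow> real ^ 'k \<Rightarrow> real" where
  "tv_loss q p = (\<Sum>k\<in>UNIV. \<bar>q $ k - p $ k\<bar>)"

end

(* Feed the output word of W through W' to obtain an output word of W ** W'. With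
   N = (W ** W')^-1 we have W' ** N = W^-1, so given the first word the unprojected estimate
   computed from the second one is unbiased for the estimate computed from the first. For a
   separable convex loss, Jensen's inequality makes the degraded channel worse, up to the error
   caused by the projection and by replacing the loss with a convex extension to the whole line;
   that error only arises when an estimate is far from p, which has exponentially small
   probability exp (- a n).
   The Jensen gap beats this error. As W' is not a permutation, some row of W' splits its mass
   between two outputs whose rows of N differ in some coordinate k. Tilting that row shows that,
   for any rate c > 0, the k-th degraded estimate lies a fixed distance below p_k, and also a fixed
   distance above it, with probability at least exp (- c n) / 2 each; strict convexity of the loss
   across p_k turns this into a Jensen gap of order exp (- c n); take c = a / 2. *)
theory Submission
  imports Defs
begin

section \<open>Convex functions of one real variable\<close>

lemma convex_on_supporting_line:
  fixes f :: "real \<Rightarrow> real"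
  assumes f: "convex_on I f" and m: "m \<in> I" and u: "u \<in> I" "u < m" and v: "v \<in> I" "m < v"
  shows "\<exists>s. \<forall>x\<in>I. f m + s * (x - m) \<le> f x"
proof -
  define S where "S = (\<lambda>x. (f m - f x) / (m - x)) ` {x\<in>I. x < m}"
  have slope: "(f m - f x) / (m - x) \<le> (f y - f m) / (y - m)"
    if "x \<in> I" "y \<in> I" "x < m" "m < y" for x y
  proof -
    have "(f x - f m) / (x - m) \<le> (f m - f y) / (m - y)"
      using convex_on_slope_le[OF f that(1,2), of m] that by linarith
    moreover have "(f x - f m) / (x - m) = (f m - f x) / (m - x)"
      "(f m - f y) / (m - y) = (f y - f m) / (y - m)"
      by (metis minus_diff_eq minus_divide_divide)+
    ultimately show ?thesis by simp
  qed
  have S: "S \<noteq> {}" "bdd_above S"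
    using u v slope unfolding S_def bdd_above_def by auto
  show ?thesis
  proof (intro exI ballI)
    fix x assume x: "x \<in> I"
    consider "x < m" | "x = m" | "m < x" by linarith
    then show "f m + Sup S * (x - m) \<le> f x"
    proof cases
      case 1
      have "(f m - f x) / (m - x) \<le> Sup S"
        by (rule cSup_upper[OF _ S(2)]) (use x 1 in \<open>auto simp: S_def\<close>)
      then have "f m - f x \<le> Sup S * (m - x)" using 1 by (simp add: divide_le_eq)
      then show ?thesis by (simp add: algebra_simps)
    next
      case 3
      have "Sup S \<le> (f x - f m) / (x - m)"
        by (rule cSup_least[OF S(1)]) (use x 3 slope in \<open>auto simp: S_def\<close>)
      then have "Sup S * (x - m) \<le> f x - f m" using 3 by (simp add: le_divide_eq)
      then show ?thesis by (simp add: algebra_simps)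
    qed simp
  qed
qed

lemma convex_on_bounded_on_interval:
  fixes f :: "real \<Rightarrow> real"
  assumes f: "convex_on I f" and sub: "{lo..hi} \<subseteq> I"
    and m: "m \<in> I" "u \<in> I" "u < m" "v \<in> I" "m < v"
  shows "\<exists>C. \<forall>x\<in>{lo..hi}. \<bar>f x\<bar> \<le> C"
proof -
  obtain s where s: "\<forall>x\<in>I. f m + s * (x - m) \<le> f x"
    using convex_on_supporting_line[OF f m] by blast
  have "\<bar>f x\<bar> \<le> \<bar>f lo\<bar> + \<bar>f hi\<bar> + \<bar>f m\<bar> + \<bar>s\<bar> * (\<bar>lo\<bar> + \<bar>hi\<bar> + \<bar>m\<bar>)"
    if x: "x \<in> {lo..hi}" for x
  proof -
    have "f x \<le> max (f lo) (f hi)"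
      by (rule convex_on_le_max[OF convex_on_subset[OF f sub] x]) simp
    moreover have "f m + s * (x - m) \<le> f x" using s x sub by auto
    moreover have "\<bar>s * (x - m)\<bar> \<le> \<bar>s\<bar> * (\<bar>lo\<bar> + \<bar>hi\<bar> + \<bar>m\<bar>)"
      using x by (auto simp: abs_mult intro!: mult_left_mono)
    ultimately show ?thesis by linarith
  qed
  then show ?thesis by blast
qed

lemma convex_on_minus_affine:
  fixes f :: "real \<Rightarrow> real"
  assumes "convex_on S f"
  shows "convex_on S (\<lambda>x. f x - (c + s * (x - m)))"
proof (rule convex_onI)
  fix t x y :: real assume "0 < t" "t < 1" "x \<in> S" "y \<in> S"
  then show "f ((1 - t) *\<^sub>R x + t *\<^sub>R y) - (c + s * ((1 - t) *\<^sub>R x + t *\<^sub>R y - m))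
      \<le> (1 - t) * (f x - (c + s * (x - m))) + t * (f y - (c + s * (y - m)))"
    using convex_onD[OF assms, of t x y] by (simp add: algebra_simps)
qed (rule convex_on_imp_convex[OF assms])

lemma convex_on_le_away_from_zero:
  fixes \<phi> :: "real \<Rightarrow> real"
  assumes \<phi>: "convex_on S \<phi>" "\<And>x. x \<in> S \<Longrightarrow> 0 \<le> \<phi> x" "\<phi> m = 0"
    and "m \<in> S" "x \<in> S" "a \<in> closed_segment m x"
  shows "\<phi> a \<le> \<phi> x"
proof -
  obtain t where t: "0 \<le> t" "t \<le> 1" "a = (1 - t) *\<^sub>R m + t *\<^sub>R x"
    using assms(6) by (auto simp: closed_segment_def)
  have "\<phi> a \<le> (1 - t) * \<phi> m + t * \<phi> x" using convex_onD[OF \<phi>(1) t(1,2)] assms(4,5) t(3) by simp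
  also have "\<dots> \<le> \<phi> x" using \<phi>(2,3) assms(5) t by (simp add: mult_left_le_one_le)
  finally show ?thesis .
qed

lemma convex_on_extend_from_halfline:
  fixes h :: "real \<Rightarrow> real"
  assumes h: "convex_on {0..} h" and \<beta>: "\<beta> > 0"
  shows "\<exists>\<psi>. convex_on UNIV \<psi> \<and> (\<forall>x\<ge>\<beta>. \<psi> x = h x)"
proof -
  obtain s where s: "\<forall>x\<in>{0..}. h \<beta> + s * (x - \<beta>) \<le> h x"
    using convex_on_supporting_line[OF h, of \<beta> 0 "\<beta> + 1"] \<beta> by auto
  define \<phi> where "\<phi> x = h x - (h \<beta> + s * (x - \<beta>))" for x
  have \<phi>_convex: "convex_on {0..} \<phi>" unfolding \<phi>_def by (rule convex_on_minus_affine[OF h])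
  have \<phi>_nonneg: "\<And>x. x \<in> {0..} \<Longrightarrow> 0 \<le> \<phi> x" using s by (auto simp: \<phi>_def)
  have \<phi>_mono: "\<phi> z \<le> \<phi> z'" if "\<beta> \<le> z" "z \<le> z'" for z z'
    using convex_on_le_away_from_zero[OF \<phi>_convex \<phi>_nonneg, of \<beta> z' z] that \<beta>
    by (simp add: \<phi>_def closed_segment_eq_real_ivl)
  \<comment> \<open>Continue h to the left of \<open>\<beta>\<close> by its supporting line at \<open>\<beta>\<close>.\<close>
  define \<psi> where "\<psi> x = \<phi> (max x \<beta>) + (h \<beta> + s * (x - \<beta>))" for x
  have "convex_on UNIV \<psi>"
  proof (rule convex_onI)
    fix t x y :: real assume t: "0 < t" "t < 1"
    have "(1 - t) * x + t * y \<le> (1 - t) * max x \<beta> + t * max y \<beta>"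
      using t by (intro add_mono mult_left_mono) auto
    moreover have "(1 - t) * \<beta> + t * \<beta> \<le> (1 - t) * max x \<beta> + t * max y \<beta>"
      using t by (intro add_mono mult_left_mono) auto
    then have "\<beta> \<le> (1 - t) * max x \<beta> + t * max y \<beta>" by (simp add: algebra_simps)
    ultimately have "\<phi> (max ((1 - t) * x + t * y) \<beta>) \<le> \<phi> ((1 - t) * max x \<beta> + t * max y \<beta>)"
      by (intro \<phi>_mono) auto
    also have "\<dots> \<le> (1 - t) * \<phi> (max x \<beta>) + t * \<phi> (max y \<beta>)"
      using convex_onD[OF \<phi>_convex, of t "max x \<beta>" "max y \<beta>"] t \<beta> by simp
    finally show "\<psi> ((1 - t) *\<^sub>R x + t *\<^sub>R y) \<le> (1 - t) * \<psi> x + t * \<psi> y"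
      by (simp add: \<psi>_def algebra_simps)
  qed simp
  moreover have "\<forall>x\<ge>\<beta>. \<psi> x = h x" by (auto simp: \<psi>_def \<phi>_def max_def)
  ultimately show ?thesis by blast
qed

definition chord_gap :: "(real \<Rightarrow> real) \<Rightarrow> real \<Rightarrow> real \<Rightarrow> real \<Rightarrow> real" where
  "chord_gap \<psi> a b m = ((b - m) * \<psi> a + (m - a) * \<psi> b) / (b - a) - \<psi> m"

lemma chord_gap_ge_min:
  assumes \<psi>: "convex_on UNIV \<psi>" and m: "m1 \<le> m" "m \<le> m2" "m1 < m2"
  shows "min (chord_gap \<psi> a b m1) (chord_gap \<psi> a b m2) \<le> chord_gap \<psi> a b m"
proof -
  define t where "t = (m - m1) / (m2 - m1)"
  have t: "0 \<le> t" "t \<le> 1" using m by (auto simp: t_def divide_simps)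
  have "t * (m2 - m1) = m - m1" using m by (simp add: t_def)
  then have m_eq: "m = (1 - t) * m1 + t * m2" by (simp add: algebra_simps)
  \<comment> \<open>The chord term is affine in \<open>m\<close> and \<open>\<psi>\<close> is convex, so the gap is concave in \<open>m\<close>.\<close>
  have "\<psi> m \<le> (1 - t) * \<psi> m1 + t * \<psi> m2"
    using convex_onD[OF \<psi> t, of m1 m2] m_eq by simp
  moreover have "(b - m) * \<psi> a + (m - a) * \<psi> b
      = (1 - t) * ((b - m1) * \<psi> a + (m1 - a) * \<psi> b) + t * ((b - m2) * \<psi> a + (m2 - a) * \<psi> b)"
    unfolding m_eq by (simp add: algebra_simps)
  then have "((b - m) * \<psi> a + (m - a) * \<psi> b) / (b - a)
      = (1 - t) * (((b - m1) * \<psi> a + (m1 - a) * \<psi> b) / (b - a))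
        + t * (((b - m2) * \<psi> a + (m2 - a) * \<psi> b) / (b - a))"
    by (simp add: add_divide_distrib distrib_left)
  ultimately have "(1 - t) * chord_gap \<psi> a b m1 + t * chord_gap \<psi> a b m2 \<le> chord_gap \<psi> a b m"
    unfolding chord_gap_def by (simp add: algebra_simps)
  moreover have "(1 - t) * min (chord_gap \<psi> a b m1) (chord_gap \<psi> a b m2)
        + t * min (chord_gap \<psi> a b m1) (chord_gap \<psi> a b m2)
      \<le> (1 - t) * chord_gap \<psi> a b m1 + t * chord_gap \<psi> a b m2"
    using t by (intro add_mono mult_left_mono) auto
  ultimately show ?thesis by (simp add: algebra_simps)
qed

lemma chord_gap_le_supporting_excess:
  fixes \<psi> :: "real \<Rightarrow> real"
  assumes ab: "a < m" "m < b" and s: "\<And>x. \<psi> m + s * (x - m) \<le> \<psi> x"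
  shows "chord_gap \<psi> a b m \<le> (\<psi> a - (\<psi> m + s * (a - m))) + (\<psi> b - (\<psi> m + s * (b - m)))"
proof -
  define \<phi> where "\<phi> x = \<psi> x - (\<psi> m + s * (x - m))" for x
  have \<phi>_nonneg: "0 \<le> \<phi> x" for x using s[of x] by (simp add: \<phi>_def)
  \<comment> \<open>Subtracting the supporting line does not change the chord gap.\<close>
  have "chord_gap \<psi> a b m = ((b - m) * \<phi> a + (m - a) * \<phi> b) / (b - a)"
    using ab by (simp add: chord_gap_def \<phi>_def field_simps)
  moreover have "0 \<le> (m - a) * \<phi> a + (b - m) * \<phi> b"
    using ab \<phi>_nonneg[of a] \<phi>_nonneg[of b] by simp
  then have "(b - m) * \<phi> a + (m - a) * \<phi> b \<le> (\<phi> a + \<phi> b) * (b - a)"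
    by (simp add: algebra_simps)
  ultimately show ?thesis using ab by (simp add: divide_le_eq \<phi>_def)
qed

lemma jensen_gap_two_sided:
  fixes \<psi> :: "real \<Rightarrow> real" and w X :: "'a \<Rightarrow> real"
  assumes \<psi>: "convex_on UNIV \<psi>" and S: "finite S"
    and w: "\<And>i. i \<in> S \<Longrightarrow> 0 \<le> w i" "sum w S = 1" and mean: "(\<Sum>i\<in>S. w i * X i) = m"
    and ab: "a < m" "m < b"
    and \<pi>: "0 \<le> \<pi>" "\<pi> \<le> sum w {i\<in>S. X i \<le> a}" "\<pi> \<le> sum w {i\<in>S. b \<le> X i}"
  shows "\<pi> * chord_gap \<psi> a b m \<le> (\<Sum>i\<in>S. w i * \<psi> (X i)) - \<psi> m"
proof -
  obtain s where s: "\<And>x. \<psi> m + s * (x - m) \<le> \<psi> x"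
    using convex_on_supporting_line[OF \<psi>, of m "m - 1" "m + 1"] by auto
  define \<phi> where "\<phi> x = \<psi> x - (\<psi> m + s * (x - m))" for x
  have \<phi>_nonneg: "0 \<le> \<phi> x" for x using s[of x] by (simp add: \<phi>_def)
  have \<phi>_mono: "\<phi> c \<le> \<phi> x" if "c \<in> closed_segment m x" for c x
    using convex_on_le_away_from_zero[OF convex_on_minus_affine[OF \<psi>, of "\<psi> m" s m], of m x c] s that
    by (simp add: \<phi>_def)
  have "(\<Sum>i\<in>S. w i * \<phi> (X i))
      = (\<Sum>i\<in>S. w i * \<psi> (X i)) - (\<psi> m - s * m) * sum w S - s * (\<Sum>i\<in>S. w i * X i)"
    by (simp add: \<phi>_def algebra_simps sum_subtractf sum.distrib sum_distrib_left sum_distrib_right)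
  then have "(\<Sum>i\<in>S. w i * \<psi> (X i)) - \<psi> m = (\<Sum>i\<in>S. w i * \<phi> (X i))"
    using w(2) mean by simp
  also have "\<dots> \<ge> (\<Sum>i\<in>S. (if X i \<le> a then w i else 0) * \<phi> a + (if b \<le> X i then w i else 0) * \<phi> b)"
  proof (intro sum_mono)
    fix i assume i: "i \<in> S"
    have "\<phi> a \<le> \<phi> (X i)" if "X i \<le> a"
      using ab that by (intro \<phi>_mono) (simp add: closed_segment_eq_real_ivl)
    moreover have "\<phi> b \<le> \<phi> (X i)" if "b \<le> X i"
      using ab that by (intro \<phi>_mono) (simp add: closed_segment_eq_real_ivl)
    ultimately show "(if X i \<le> a then w i else 0) * \<phi> a + (if b \<le> X i then w i else 0) * \<phi> b
        \<le> w i * \<phi> (X i)"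
      using ab w(1)[OF i] \<phi>_nonneg[of "X i"] by (auto simp: mult_left_mono)
  qed
  also have "(\<Sum>i\<in>S. (if X i \<le> a then w i else 0) * \<phi> a + (if b \<le> X i then w i else 0) * \<phi> b)
      = sum w {i\<in>S. X i \<le> a} * \<phi> a + sum w {i\<in>S. b \<le> X i} * \<phi> b"
    using S by (simp add: sum.distrib sum.inter_filter flip: sum_distrib_right)
  also have "\<dots> \<ge> \<pi> * (\<phi> a + \<phi> b)"
    using \<pi> \<phi>_nonneg by (simp add: distrib_left add_mono mult_right_mono)
  finally have "\<pi> * (\<phi> a + \<phi> b) \<le> (\<Sum>i\<in>S. w i * \<psi> (X i)) - \<psi> m" .
  moreover have "chord_gap \<psi> a b m \<le> \<phi> a + \<phi> b"
    unfolding \<phi>_def by (rule chord_gap_le_supporting_excess[OF ab s])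
  ultimately show ?thesis using \<pi>(1) by (meson mult_left_mono order_trans)
qed

definition strictly_convex_across :: "real \<Rightarrow> (real \<Rightarrow> real) \<Rightarrow> bool" where
  "strictly_convex_across c f \<longleftrightarrow>
     (\<forall>a b l. 0 \<le> a \<longrightarrow> a < c \<longrightarrow> c < b \<longrightarrow> 0 < l \<longrightarrow> l < 1 \<longrightarrow>
        f (l * a + (1 - l) * b) < l * f a + (1 - l) * f b)"

lemma convex_on_sq_dist: "convex_on {0..} (\<lambda>x::real. (x - c)\<^sup>2)"
proof (rule convex_onI)
  fix t x y :: real assume "0 < t" "t < 1"
  then have "0 \<le> t * (1 - t) * (x - y)\<^sup>2" by simp
  then show "((1 - t) *\<^sub>R x + t *\<^sub>R y - c)\<^sup>2 \<le> (1 - t) * (x - c)\<^sup>2 + t * (y - c)\<^sup>2"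
    by (simp add: power2_eq_square algebra_simps)
qed (simp add: convex_real_interval)

lemma strictly_convex_across_sq_dist: "strictly_convex_across c (\<lambda>x. (x - c)\<^sup>2)"
  unfolding strictly_convex_across_def
proof (intro allI impI)
  fix a b l :: real assume "0 \<le> a" "a < c" "c < b" "0 < l" "l < 1"
  then have "0 < l * (1 - l) * (a - b)\<^sup>2" by simp
  then show "(l * a + (1 - l) * b - c)\<^sup>2 < l * (a - c)\<^sup>2 + (1 - l) * (b - c)\<^sup>2"
    by (simp add: power2_eq_square algebra_simps)
qed

lemma convex_on_abs_dist: "convex_on {0..} (\<lambda>x::real. \<bar>x - c\<bar>)"
  using convex_on_dist[of "{0..}" c] by (simp add: dist_real_def abs_minus_commute)

lemma strictly_convex_across_abs_dist: "strictly_convex_across c (\<lambda>x. \<bar>x - c\<bar>)"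
  unfolding strictly_convex_across_def
proof (intro allI impI)
  fix a b l :: real assume ab: "0 \<le> a" "a < c" "c < b" and l: "0 < l" "l < 1"
  have "l * (a - c) < 0" "0 < (1 - l) * (b - c)" using ab l by (simp_all add: mult_pos_neg)
  then show "\<bar>l * a + (1 - l) * b - c\<bar> < l * \<bar>a - c\<bar> + (1 - l) * \<bar>b - c\<bar>"
    using ab l by (simp add: abs_if algebra_simps)
qed

lemma convex_on_perspective:
  fixes f :: "real \<Rightarrow> real"
  assumes f: "convex_on {0..} f" and c: "0 < c"
  shows "convex_on {0..} (\<lambda>x. c * f (x / c))"
proof (rule convex_onI)
  fix t x y :: real assume t: "0 < t" "t < 1" and xy: "x \<in> {0..}" "y \<in> {0..}"
  have "f ((1 - t) *\<^sub>R (x / c) + t *\<^sub>R (y / c)) \<le> (1 - t) * f (x / c) + t * f (y / c)"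
    using convex_onD[OF f, of t "x / c" "y / c"] t xy c by simp
  moreover have "((1 - t) *\<^sub>R x + t *\<^sub>R y) / c = (1 - t) *\<^sub>R (x / c) + t *\<^sub>R (y / c)"
    by (simp add: add_divide_distrib)
  ultimately have "c * f (((1 - t) *\<^sub>R x + t *\<^sub>R y) / c) \<le> c * ((1 - t) * f (x / c) + t * f (y / c))"
    using c by simp
  then show "c * f (((1 - t) *\<^sub>R x + t *\<^sub>R y) / c) \<le> (1 - t) * (c * f (x / c)) + t * (c * f (y / c))"
    by (simp add: algebra_simps)
qed (simp add: convex_real_interval)

lemma strictly_convex_across_perspective:
  assumes f: "strictly_convex_at_one f" and c: "0 < c"
  shows "strictly_convex_across c (\<lambda>x. c * f (x / c))"
  unfolding strictly_convex_across_def
proof (intro allI impI)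
  fix a b l :: real assume ab: "0 \<le> a" "a < c" "c < b" and l: "0 < l" "l < 1"
  define e e' where "e = 1 - a / c" and "e' = b / c - 1"
  have "0 < e" "e \<le> 1" "0 < e'" using ab c by (auto simp: e_def e'_def divide_simps)
  then have "f (l * (1 - e) + (1 - l) * (1 + e')) < l * f (1 - e) + (1 - l) * f (1 + e')"
    using f l unfolding strictly_convex_at_one_def by blast
  then have "f ((l * a + (1 - l) * b) / c) < l * f (a / c) + (1 - l) * f (b / c)"
    by (simp add: e_def e'_def add_divide_distrib)
  then have "c * f ((l * a + (1 - l) * b) / c) < c * (l * f (a / c) + (1 - l) * f (b / c))"
    using c by simp
  then show "c * f ((l * a + (1 - l) * b) / c) < l * (c * f (a / c)) + (1 - l) * (c * f (b / c))"
    by (simp add: algebra_simps)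
qed

section \<open>Words and Chernoff bounds\<close>

abbreviation words :: "nat \<Rightarrow> 'a list set" where
  "words n \<equiv> {xs. length xs = n}"

lemma finite_words: "finite (words n :: 'a::finite list set)"
  using finite_lists_length_eq[of "UNIV :: 'a set" n] by simp

lemma sum_words_Suc:
  fixes F :: "'a::finite list \<Rightarrow> 'b::comm_monoid_add"
  shows "(\<Sum>ys\<in>words (Suc n). F ys) = (\<Sum>y\<in>UNIV. \<Sum>ys\<in>words n. F (y # ys))"
proof -
  have words: "words (Suc n) = (\<lambda>(y, ys). y # ys) ` (UNIV \<times> words n)"
    by (auto simp: length_Suc_conv)
  have inj: "inj_on (\<lambda>(y, ys). y # ys) (UNIV \<times> words n)"
    by (auto simp: inj_on_def)
  have "(\<Sum>ys\<in>words (Suc n). F ys) = sum (F \<circ> (\<lambda>(y, ys). y # ys)) (UNIV \<times> words n)"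
    unfolding words sum.reindex[OF inj] ..
  also have "\<dots> = (\<Sum>y\<in>UNIV. \<Sum>ys\<in>words n. F (y # ys))"
    by (simp add: sum.cartesian_product case_prod_unfold comp_def)
  finally show ?thesis .
qed

lemma sum_words_prod_list_map2:
  fixes F :: "'a \<Rightarrow> 'y::finite \<Rightarrow> 'b::comm_semiring_1"
  shows "(\<Sum>ys\<in>words (length xs). prod_list (map2 F xs ys))
       = prod_list (map (\<lambda>x. \<Sum>y\<in>UNIV. F x y) xs)"
proof (induction xs)
  case (Cons x xs)
  then show ?case by (simp add: sum_words_Suc flip: sum_distrib_left sum_distrib_right)
qed simp

lemma map2_flip: "map2 F xs ys = map2 (\<lambda>y x. F x y) ys xs"
proof (induction xs arbitrary: ys)
  case (Cons x xs)
  then show ?case by (cases ys) auto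
qed simp

lemma prod_list_map2_mult:
  fixes F G :: "'a \<Rightarrow> 'b \<Rightarrow> 'c::comm_monoid_mult"
  shows "prod_list (map2 F xs ys) * prod_list (map2 proj_loss xs ys)
       = prod_list (map2 (\<lambda>x y. F x y * proj_loss x y) xs ys)"
proof (induction xs arbitrary: ys)
  case (Cons x xs)
  then show ?case by (cases ys) (simp_all add: mult_ac)
qed simp

lemma sum_words_prod_list_map2_sum_list:
  fixes T F :: "'a \<Rightarrow> 'y::finite \<Rightarrow> real"
  assumes T: "\<And>x. (\<Sum>y\<in>UNIV. T x y) = 1"
  shows "(\<Sum>ys\<in>words (length xs). prod_list (map2 T xs ys) * sum_list (map2 F xs ys))
       = sum_list (map (\<lambda>x. \<Sum>y\<in>UNIV. T x y * F x y) xs)"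
proof (induction xs)
  case (Cons x xs)
  have mass: "(\<Sum>ys\<in>words (length xs). prod_list (map2 T xs ys)) = 1"
    by (simp add: sum_words_prod_list_map2 T map_replicate_const)
  have "(\<Sum>ys\<in>words (length (x # xs)). prod_list (map2 T (x # xs) ys) * sum_list (map2 F (x # xs) ys))
      = (\<Sum>y\<in>UNIV. T x y * F x y * (\<Sum>ys\<in>words (length xs). prod_list (map2 T xs ys))
          + T x y * (\<Sum>ys\<in>words (length xs). prod_list (map2 T xs ys) * sum_list (map2 F xs ys)))"
    by (simp add: sum_words_Suc algebra_simps sum.distrib sum_distrib_left)
  also have "\<dots> = (\<Sum>y\<in>UNIV. T x y * F x y) + sum_list (map (\<lambda>x. \<Sum>y\<in>UNIV. T x y * F x y) xs)"
    by (simp add: mass Cons sum.distrib T flip: sum_distrib_right)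
  finally show ?case by simp
qed simp

lemma prod_list_le_power:
  fixes g :: "'a \<Rightarrow> real"
  assumes "\<And>x. 0 \<le> g x" "\<And>x. g x \<le> c"
  shows "prod_list (map g xs) \<le> c ^ length xs"
proof (induction xs)
  case (Cons x xs)
  have "0 \<le> prod_list (map g xs)" by (rule prod_list_nonneg) (auto simp: assms(1))
  then show ?case using Cons assms by (auto intro: mult_mono order_trans)
qed simp

lemma exp_le_one_plus_x_plus_sq:
  fixes x :: real
  assumes "\<bar>x\<bar> \<le> 1"
  shows "exp x \<le> 1 + x + x\<^sup>2"
proof (cases "0 \<le> x")
  case True then show ?thesis using exp_bound[of x] assms by simp
next
  case False
  define y where "y = - x"
  have y: "0 \<le> y" "y \<le> 1" using False assms by (auto simp: y_def)
  have "1 \<le> 1 + y\<^sup>2 / 2 + y ^ 3 / 2 + y ^ 4 / 2" using y by simp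
  also have "\<dots> = (1 - y + y\<^sup>2) * (1 + y + y\<^sup>2 / 2)"
    by (simp add: power2_eq_square power3_eq_cube power4_eq_xxxx field_simps)
  also have "\<dots> \<le> (1 - y + y\<^sup>2) * exp y"
    using exp_lower_Taylor_quadratic[of y] y
    by (intro mult_left_mono) (auto simp: power2_eq_square intro: add_nonneg_nonneg)
  finally have "1 / exp y \<le> 1 - y + y\<^sup>2" by (simp add: divide_le_eq)
  then show ?thesis by (simp add: y_def exp_minus inverse_eq_divide)
qed

text \<open>The exponent that Chernoff's method yields with the parameter
  \<open>min (1 / B) (t / (2 * B\<^sup>2))\<close>, for deviations \<open>t\<close> of variables bounded by \<open>B\<close>.\<close>
definition chernoff_rate :: "real \<Rightarrow> real \<Rightarrow> real" where
  "chernoff_rate t B = min (1 / B) (t / (2 * B\<^sup>2)) * t / 2"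

lemma chernoff_rate_pos: "0 < t \<Longrightarrow> 0 < B \<Longrightarrow> 0 < chernoff_rate t B"
  by (simp add: chernoff_rate_def)

lemma centered_exp_moment_le:
  fixes T f :: "'y::finite \<Rightarrow> real"
  assumes T: "\<And>y. 0 \<le> T y" "(\<Sum>y\<in>UNIV. T y) = 1" and centered: "(\<Sum>y\<in>UNIV. T y * f y) = 0"
    and f: "\<And>y. \<bar>f y\<bar> \<le> B" and l: "0 \<le> l" "l * B \<le> 1"
  shows "(\<Sum>y\<in>UNIV. T y * exp (l * f y)) \<le> exp (l\<^sup>2 * B\<^sup>2)"
proof -
  have "(\<Sum>y\<in>UNIV. T y * exp (l * f y)) \<le> (\<Sum>y\<in>UNIV. T y * (1 + l * f y + (l * f y)\<^sup>2))"
  proof (intro sum_mono mult_left_mono exp_le_one_plus_x_plus_sq)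
    fix y
    have "\<bar>l * f y\<bar> \<le> l * B" using f[of y] l by (simp add: abs_mult mult_left_mono)
    then show "\<bar>l * f y\<bar> \<le> 1" using l by simp
  qed (simp add: T)
  also have "\<dots> = (\<Sum>y\<in>UNIV. T y) + l * (\<Sum>y\<in>UNIV. T y * f y) + l\<^sup>2 * (\<Sum>y\<in>UNIV. T y * (f y)\<^sup>2)"
    by (simp add: algebra_simps sum.distrib sum_distrib_left power_mult_distrib)
  also have "\<dots> = 1 + l\<^sup>2 * (\<Sum>y\<in>UNIV. T y * (f y)\<^sup>2)"
    using T(2) centered by simp
  also have "(\<Sum>y\<in>UNIV. T y * (f y)\<^sup>2) \<le> (\<Sum>y\<in>UNIV. T y * B\<^sup>2)"
  proof (intro sum_mono mult_left_mono)
    show "(f y)\<^sup>2 \<le> B\<^sup>2" for y using f[of y] by (metis abs_ge_zero power2_abs power_mono)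
  qed (simp add: T)
  also have "\<dots> = B\<^sup>2" by (simp add: T(2) flip: sum_distrib_right)
  finally show ?thesis
    using exp_ge_add_one_self[of "l\<^sup>2 * B\<^sup>2"] by (smt (verit) mult_left_mono zero_le_power2)
qed

lemma exp_sum_list_map2:
  fixes f :: "'a \<Rightarrow> 'b \<Rightarrow> real"
  shows "exp (c * sum_list (map2 f xs ys)) = prod_list (map2 (\<lambda>x y. exp (c * f x y)) xs ys)"
proof (induction xs arbitrary: ys)
  case (Cons x xs)
  then show ?case by (cases ys) (simp_all add: distrib_left exp_add)
qed simp

lemma exponential_markov:
  fixes P S x l :: real
  assumes "0 \<le> P" "0 \<le> l"
  shows "(if x \<le> S then P else 0) \<le> exp (- l * x) * (P * exp (l * S))"
proof (cases "x \<le> S")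
  case True
  then have "P * 1 \<le> P * exp (l * (S - x))" using assms by (intro mult_left_mono) auto
  with True show ?thesis by (simp add: right_diff_distrib exp_diff exp_minus field_simps)
qed (use assms in simp)

text \<open>The \<open>i\<close>-th letter of the word is drawn independently from the row \<open>T (xs ! i)\<close>.\<close>
lemma chernoff_product_kernel:
  fixes T f :: "'a \<Rightarrow> 'y::finite \<Rightarrow> real" and t B :: real
  assumes T: "\<And>x y. 0 \<le> T x y" "\<And>x. (\<Sum>y\<in>UNIV. T x y) = 1"
    and centered: "\<And>x. (\<Sum>y\<in>UNIV. T x y * f x y) = 0"
    and f: "\<And>x y. \<bar>f x y\<bar> \<le> B" and B: "0 < B" and t: "0 < t"
  shows "(\<Sum>ys\<in>words (length xs).
            if t * length xs \<le> sum_list (map2 f xs ys) then prod_list (map2 T xs ys) else 0)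
         \<le> exp (- chernoff_rate t B * length xs)"
proof -
  define n where "n = length xs"
  define l where "l = min (1 / B) (t / (2 * B\<^sup>2))"
  have l: "0 < l" "l * B \<le> 1" "l * B\<^sup>2 \<le> t / 2"
    using B t by (auto simp: l_def min_def field_simps)
  have P: "0 \<le> prod_list (map2 T xs ys)" for ys by (intro prod_list_nonneg) (auto simp: T)
  have "(\<Sum>ys\<in>words n. if t * n \<le> sum_list (map2 f xs ys) then prod_list (map2 T xs ys) else 0)
      \<le> exp (- l * (t * n))
          * (\<Sum>ys\<in>words n. prod_list (map2 T xs ys) * exp (l * sum_list (map2 f xs ys)))"
    unfolding sum_distrib_left using l(1) by (intro sum_mono exponential_markov P) simp
  also have "(\<Sum>ys\<in>words n. prod_list (map2 T xs ys) * exp (l * sum_list (map2 f xs ys)))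
      = prod_list (map (\<lambda>x. \<Sum>y\<in>UNIV. T x y * exp (l * f x y)) xs)"
    by (simp add: n_def exp_sum_list_map2 prod_list_map2_mult sum_words_prod_list_map2)
  also have "\<dots> \<le> exp (l\<^sup>2 * B\<^sup>2) ^ n"
    unfolding n_def
    by (intro prod_list_le_power sum_nonneg centered_exp_moment_le) (use T centered f l in auto)
  finally have "(\<Sum>ys\<in>words n. if t * n \<le> sum_list (map2 f xs ys) then prod_list (map2 T xs ys) else 0)
      \<le> exp (- (l * t - l\<^sup>2 * B\<^sup>2) * n)"
    by (simp add: exp_of_nat_mult[symmetric] exp_add[symmetric] algebra_simps)
  also have "\<dots> \<le> exp (- chernoff_rate t B * n)"
  proof -
    have "l\<^sup>2 * B\<^sup>2 \<le> l * (t / 2)"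
      using l by (simp add: power2_eq_square mult.assoc mult_left_mono)
    moreover have "chernoff_rate t B = l * t / 2" by (simp add: chernoff_rate_def l_def)
    ultimately have "chernoff_rate t B * n \<le> (l * t - l\<^sup>2 * B\<^sup>2) * n"
      by (intro mult_right_mono) auto
    then show ?thesis by (simp add: left_diff_distrib)
  qed
  finally show ?thesis by (simp add: n_def)
qed

lemma iid_deviation_one_sided:
  fixes Q f :: "'y::finite \<Rightarrow> real" and t B :: real
  assumes Q: "\<And>y. 0 \<le> Q y" "(\<Sum>y\<in>UNIV. Q y) = 1" and centered: "(\<Sum>y\<in>UNIV. Q y * f y) = 0"
    and f: "\<And>y. \<bar>f y\<bar> \<le> B" and B: "0 < B" and t: "0 < t"
  shows "(\<Sum>ys\<in>words n. if t * n \<le> sum_list (map f ys) then prod_list (map Q ys) else 0)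
     \<le> exp (- chernoff_rate t B * n)"
proof -
  \<comment> \<open>An i.i.d. word is a product kernel driven by the constant input word of length \<open>n\<close>.\<close>
  define xs where "xs = replicate n ()"
  have "map2 F xs ys = map (F ()) ys" if "length ys = n" for F :: "unit \<Rightarrow> 'y \<Rightarrow> real" and ys
    using that unfolding xs_def by (induction ys arbitrary: n) auto
  then have "(\<Sum>ys\<in>words n. if t * n \<le> sum_list (map f ys) then prod_list (map Q ys) else 0)
      = (\<Sum>ys\<in>words (length xs). if t * length xs \<le> sum_list (map2 (\<lambda>_. f) xs ys)
            then prod_list (map2 (\<lambda>_. Q) xs ys) else 0)"
    by (intro sum.cong) (auto simp: xs_def)
  also have "\<dots> \<le> exp (- chernoff_rate t B * n)"
    using chernoff_product_kernel[of "\<lambda>_. Q" "\<lambda>_. f" B t xs] assms by (simp add: xs_def)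
  finally show ?thesis .
qed

lemma iid_deviation_two_sided:
  fixes Q c :: "'y::finite \<Rightarrow> real" and t B :: real
  assumes Q: "\<And>y. 0 \<le> Q y" "(\<Sum>y\<in>UNIV. Q y) = 1" and mean: "(\<Sum>y\<in>UNIV. Q y * c y) = \<mu>"
    and c: "\<And>y. \<bar>c y - \<mu>\<bar> \<le> B" and B: "0 < B" and t: "0 < t"
  shows "(\<Sum>ys\<in>words n. if t * n \<le> \<bar>sum_list (map c ys) - n * \<mu>\<bar> then prod_list (map Q ys) else 0)
     \<le> 2 * exp (- chernoff_rate t B * n)"
proof -
  have "(\<Sum>ys\<in>words n. if t * n \<le> \<bar>sum_list (map c ys) - n * \<mu>\<bar> then prod_list (map Q ys) else 0)
      \<le> (\<Sum>ys\<in>words n. (if t * n \<le> sum_list (map (\<lambda>y. c y - \<mu>) ys) then prod_list (map Q ys) else 0)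
          + (if t * n \<le> sum_list (map (\<lambda>y. \<mu> - c y) ys) then prod_list (map Q ys) else 0))"
  proof (intro sum_mono)
    fix ys :: "'y list" assume "ys \<in> words n"
    moreover have "0 \<le> prod_list (map Q ys)" by (intro prod_list_nonneg) (auto simp: Q)
    ultimately show "(if t * n \<le> \<bar>sum_list (map c ys) - n * \<mu>\<bar> then prod_list (map Q ys) else 0)
        \<le> (if t * n \<le> sum_list (map (\<lambda>y. c y - \<mu>) ys) then prod_list (map Q ys) else 0)
          + (if t * n \<le> sum_list (map (\<lambda>y. \<mu> - c y) ys) then prod_list (map Q ys) else 0)"
      by (auto simp: sum_list_subtractf sum_list_triv abs_if)
  qed
  also have "\<dots> \<le> exp (- chernoff_rate t B * n) + exp (- chernoff_rate t B * n)"
    unfolding sum.distrib using Q(2) mean c B t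
    by (intro add_mono iid_deviation_one_sided Q)
      (auto simp: algebra_simps sum_subtractf abs_minus_commute simp flip: sum_distrib_right)
  finally show ?thesis by simp
qed

lemma iid_deviation_union_bound:
  fixes Q :: "'y::finite \<Rightarrow> real" and c :: "'k::finite \<Rightarrow> 'y \<Rightarrow> real" and t B :: real
  assumes Q: "\<And>y. 0 \<le> Q y" "(\<Sum>y\<in>UNIV. Q y) = 1"
    and mean: "\<And>k. (\<Sum>y\<in>UNIV. Q y * c k y) = \<mu> k"
    and c: "\<And>k y. \<bar>c k y - \<mu> k\<bar> \<le> B" and B: "0 < B" and t: "0 < t"
  shows "(\<Sum>ys\<in>words n. if \<exists>k. t * n \<le> \<bar>sum_list (map (c k) ys) - n * \<mu> k\<bar>
            then prod_list (map Q ys) else 0)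
     \<le> 2 * CARD('k) * exp (- chernoff_rate t B * n)"
proof -
  have "(\<Sum>ys\<in>words n. if \<exists>k. t * n \<le> \<bar>sum_list (map (c k) ys) - n * \<mu> k\<bar>
            then prod_list (map Q ys) else 0)
      \<le> (\<Sum>ys\<in>words n. \<Sum>k\<in>UNIV. if t * n \<le> \<bar>sum_list (map (c k) ys) - n * \<mu> k\<bar>
            then prod_list (map Q ys) else 0)"
  proof (intro sum_mono)
    fix ys :: "'y list"
    have P: "0 \<le> prod_list (map Q ys)" by (intro prod_list_nonneg) (auto simp: Q)
    show "(if \<exists>k. t * n \<le> \<bar>sum_list (map (c k) ys) - n * \<mu> k\<bar> then prod_list (map Q ys) else 0)
        \<le> (\<Sum>k\<in>UNIV. if t * n \<le> \<bar>sum_list (map (c k) ys) - n * \<mu> k\<bar> then prod_list (map Q ys) else 0)"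
    proof (cases "\<exists>k. t * n \<le> \<bar>sum_list (map (c k) ys) - n * \<mu> k\<bar>")
      case True
      then obtain k where "t * n \<le> \<bar>sum_list (map (c k) ys) - n * \<mu> k\<bar>" by blast
      then show ?thesis
        using member_le_sum[of k UNIV "\<lambda>k. if t * n \<le> \<bar>sum_list (map (c k) ys) - n * \<mu> k\<bar>
            then prod_list (map Q ys) else 0"] P by auto
    qed (use P in \<open>simp add: sum_nonneg\<close>)
  qed
  also have "\<dots> = (\<Sum>k\<in>UNIV. \<Sum>ys\<in>words n. if t * n \<le> \<bar>sum_list (map (c k) ys) - n * \<mu> k\<bar>
            then prod_list (map Q ys) else 0)"
    by (rule sum.swap)
  also have "\<dots> \<le> (\<Sum>k\<in>(UNIV :: 'k set). 2 * exp (- chernoff_rate t B * n))"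
    by (intro sum_mono iid_deviation_two_sided Q mean c B t)
  finally show ?thesis by simp
qed

lemma eventually_exp_neg_less:
  fixes c e :: real
  assumes "0 < c" "0 < e"
  shows "\<forall>\<^sub>F n in sequentially. exp (- c * real n) < e"
proof -
  have "((\<lambda>n. exp (- c * real n)) \<longlongrightarrow> 0) sequentially"
    using assms(1)
    by (intro filterlim_compose[OF exp_at_bot] filterlim_tendsto_neg_mult_at_bot[OF tendsto_const]
        filterlim_real_sequentially) simp
  then show ?thesis using assms(2) by (rule order_tendstoD)
qed

section \<open>Stochastic matrices\<close>

lemma matrix_inv_right_left:
  fixes A :: "'a::semiring_1^'n^'m"
  assumes "invertible A"
  shows matrix_inv_right: "A ** matrix_inv A = mat 1"
    and matrix_inv_left: "matrix_inv A ** A = mat 1"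
proof -
  have "\<exists>A'. A ** A' = mat 1 \<and> A' ** A = mat 1" using assms by (simp add: invertible_def)
  then have "A ** matrix_inv A = mat 1 \<and> matrix_inv A ** A = mat 1"
    unfolding matrix_inv_def by (rule someI_ex)
  then show "A ** matrix_inv A = mat 1" "matrix_inv A ** A = mat 1" by auto
qed

lemma invertible_matrix_inv:
  assumes "invertible A"
  shows "invertible (matrix_inv A)"
  using matrix_inv_right_left[OF assms] unfolding invertible_def by blast

lemma invertible_vector_matrix_mult_eq_0:
  fixes A :: "'a::semiring_1^'n^'n"
  assumes "invertible A" "x v* A = 0"
  shows "x = 0"
proof -
  have "x = (x v* A) v* matrix_inv A"
    by (simp add: vector_matrix_mul_assoc matrix_inv_right[OF assms(1)])
  then show ?thesis using assms(2) by simp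
qed

lemma row_stochastic_mult:
  assumes "row_stochastic V" "row_stochastic V'"
  shows "row_stochastic (V ** V')"
proof -
  have "(\<Sum>j\<in>UNIV. (V ** V')$i$j) = (\<Sum>k\<in>UNIV. V$i$k * (\<Sum>j\<in>UNIV. V'$k$j))" for i
    by (simp add: matrix_matrix_mult_def sum_distrib_left) (rule sum.swap)
  then show ?thesis
    using assms by (auto simp: row_stochastic_def matrix_matrix_mult_def intro!: sum_nonneg)
qed

lemma vector_matrix_mult_prob_simplex:
  assumes "p \<in> prob_simplex" "row_stochastic V"
  shows "p v* V \<in> prob_simplex"
proof -
  have "(\<Sum>y\<in>UNIV. (p v* V)$y) = (\<Sum>i\<in>UNIV. p$i * (\<Sum>y\<in>UNIV. V$i$y))"
    by (simp add: vector_matrix_mult_def sum_distrib_left) (rule sum.swap)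
  then show ?thesis
    using assms by (auto simp: prob_simplex_def row_stochastic_def vector_matrix_mult_def
        intro!: sum_nonneg)
qed

lemma prob_simplex_le_1:
  assumes "p \<in> prob_simplex"
  shows "p$k \<le> 1"
proof -
  have "p$k \<le> (\<Sum>k\<in>UNIV. p$k)"
    by (rule member_le_sum) (use assms in \<open>auto simp: prob_simplex_def\<close>)
  then show ?thesis using assms by (simp add: prob_simplex_def)
qed

lemma matrix_inv_row_sum:
  assumes V: "row_stochastic V" "invertible V"
  shows "(\<Sum>k\<in>UNIV. matrix_inv V $ y $ k) = 1"
proof -
  have V1: "V *v vec 1 = vec 1"
    using V by (simp add: matrix_vector_mult_def row_stochastic_def vec_eq_iff)
  have "matrix_inv V *v vec 1 = matrix_inv V *v (V *v vec 1)" by (simp only: V1)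
  also have "\<dots> = vec 1" by (simp add: matrix_vector_mul_assoc matrix_inv_left[OF V(2)])
  finally show ?thesis by (simp add: matrix_vector_mult_def vec_eq_iff)
qed

lemma vector_matrix_mult_pos:
  assumes V: "row_stochastic V" "invertible V" and p: "\<forall>k. 0 < p$k"
  shows "0 < (p v* V) $ y"
proof (rule ccontr)
  assume "\<not> 0 < (p v* V) $ y"
  then have "(\<Sum>i\<in>UNIV. p$i * V$i$y) \<le> 0" by (simp add: vector_matrix_mult_def)
  moreover have nonneg: "\<forall>i\<in>UNIV. 0 \<le> p$i * V$i$y"
    using V p by (auto simp: row_stochastic_def less_imp_le)
  ultimately have "(\<Sum>i\<in>UNIV. p$i * V$i$y) = 0" by (meson antisym sum_nonneg)
  then have "\<forall>i. p$i * V$i$y = 0" using nonneg by (simp add: sum_nonneg_eq_0_iff)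
  then have "\<forall>i. V$i$y = 0" using p by (metis less_irrefl mult_eq_0_iff)
  \<comment> \<open>A zero column contradicts invertibility.\<close>
  then have "V *v axis y 1 = 0"
    by (simp add: matrix_vector_mult_def axis_def vec_eq_iff mult.commute[of _ "if _ then _ else _"]
        if_distrib cong: if_cong)
  then have "axis y 1 = (0 :: real^_)"
    using inj_matrix_vector_mult[OF V(2)] by (metis injD matrix_vector_mult_0_right)
  then show False by (simp add: axis_eq_0_iff)
qed

lemma invertible_rows_differ:
  fixes M :: "real^'k^'k"
  assumes M: "invertible M" and j: "j1 \<noteq> j2"
  shows "\<exists>k. M$j1$k \<noteq> M$j2$k"
proof (rule ccontr)
  assume "\<not> ?thesis"
  then have eq: "\<forall>k. M$j1$k = M$j2$k" by simp
  define x :: "real^'k" where "x = (\<chi> j. if j = j1 then 1 else if j = j2 then -1 else 0)"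
  have "(x v* M)$k = 0" for k
  proof -
    have "(x v* M)$k = (\<Sum>j\<in>UNIV. (if j = j1 then M$j1$k else 0) + (if j = j2 then - M$j2$k else 0))"
      unfolding vector_matrix_mult_def x_def using j by (auto intro!: sum.cong)
    then show ?thesis using eq by (simp add: sum.distrib)
  qed
  then have "x v* M = 0" by (simp add: vec_eq_iff)
  then have "x = 0" by (rule invertible_vector_matrix_mult_eq_0[OF M])
  then have "x $ j1 = 0" by simp
  then show False by (simp add: x_def)
qed

lemma row_stochastic_two_positive:
  assumes V: "row_stochastic V" "invertible V" "\<not> permutation_matrix V"
  shows "\<exists>i j1 j2. j1 \<noteq> j2 \<and> 0 < V$i$j1 \<and> 0 < V$i$j2"
proof (rule ccontr)
  assume "\<not> ?thesis"
  then have uniq: "\<And>i j1 j2. 0 < V$i$j1 \<Longrightarrow> 0 < V$i$j2 \<Longrightarrow> j1 = j2" by blast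
  have V0: "\<And>i j. 0 \<le> V$i$j" and V1: "\<And>i. (\<Sum>j\<in>UNIV. V$i$j) = 1"
    using V(1) by (auto simp: row_stochastic_def)
  have "\<exists>j. 0 < V$i$j" for i
    using V1[of i] V0[of i] by (metis less_eq_real_def sum.neutral zero_neq_one)
  then obtain \<sigma> where \<sigma>: "\<And>i. 0 < V$i$(\<sigma> i)" by metis
  have V_eq: "V$i$j = (if \<sigma> i = j then 1 else 0)" for i j
  proof -
    have zero: "V$i$j' = 0" if "j' \<noteq> \<sigma> i" for j'
      using uniq[of i j' "\<sigma> i"] \<sigma>[of i] V0[of i j'] that by (metis less_eq_real_def)
    then have "(\<Sum>j\<in>UNIV. V$i$j) = V$i$(\<sigma> i)"
      by (subst sum.remove[of _ "\<sigma> i"]) auto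
    then show ?thesis using V1[of i] zero by auto
  qed
  have "inj \<sigma>"
  proof (rule injI, rule ccontr)
    fix i i' assume "\<sigma> i = \<sigma> i'" "i \<noteq> i'"
    then show False using invertible_rows_differ[OF V(2)] V_eq by metis
  qed
  then have "\<sigma> permutes UNIV"
    by (intro bij_imp_permutes) (auto simp: bij_def finite_UNIV_inj_surj)
  moreover have "V = (\<chi> i j. if \<sigma> i = j then 1 else 0)" using V_eq by (simp add: vec_eq_iff)
  ultimately show False using V(3) unfolding permutation_matrix_def by blast
qed

section \<open>Channels acting on words\<close>

definition channel_kernel :: "real^'k^'k \<Rightarrow> 'k list \<Rightarrow> 'k list \<Rightarrow> real" where
  "channel_kernel V ys zs = prod_list (map2 (\<lambda>y z. V$y$z) ys zs)"

lemma channel_kernel_nonneg: "row_stochastic V \<Longrightarrow> 0 \<le> channel_kernel V ys zs"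
  unfolding channel_kernel_def by (intro prod_list_nonneg) (auto simp: row_stochastic_def)

lemma sum_channel_kernel:
  assumes "row_stochastic V"
  shows "(\<Sum>zs\<in>words (length ys). channel_kernel V ys zs) = 1"
  using assms
  by (simp add: channel_kernel_def sum_words_prod_list_map2 row_stochastic_def map_replicate_const)

lemma sum_channel_kernel_sum_list:
  assumes "row_stochastic V"
  shows "(\<Sum>zs\<in>words (length ys). channel_kernel V ys zs * sum_list (map c zs))
       = sum_list (map (\<lambda>y. \<Sum>z\<in>UNIV. V$y$z * c z) ys)"
proof -
  have "map c zs = map2 (\<lambda>y z. c z) ys zs" if "length zs = length ys" for zs
    using that by (induction zs ys rule: list_induct2) auto
  then have "(\<Sum>zs\<in>words (length ys). channel_kernel V ys zs * sum_list (map c zs))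
      = (\<Sum>zs\<in>words (length ys).
          prod_list (map2 (\<lambda>y z. V$y$z) ys zs) * sum_list (map2 (\<lambda>y z. c z) ys zs))"
    by (intro sum.cong) (auto simp: channel_kernel_def)
  also have "\<dots> = sum_list (map (\<lambda>y. \<Sum>z\<in>UNIV. V$y$z * c z) ys)"
    using assms by (intro sum_words_prod_list_map2_sum_list) (simp add: row_stochastic_def)
  finally show ?thesis .
qed

lemma sum_words_prod_list_map:
  fixes Q :: "'y::finite \<Rightarrow> 'b::comm_semiring_1"
  shows "(\<Sum>ys\<in>words n. prod_list (map Q ys)) = (\<Sum>y\<in>UNIV. Q y) ^ n"
  by (induction n) (simp_all add: sum_words_Suc sum_distrib_right flip: sum_distrib_left)

lemma seq_prob_nonneg:
  assumes "p \<in> prob_simplex" "row_stochastic V"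
  shows "0 \<le> seq_prob p V ys"
  using vector_matrix_mult_prob_simplex[OF assms]
  by (auto simp: seq_prob_def prob_simplex_def intro!: prod_list_nonneg)

lemma sum_seq_prob:
  assumes "p \<in> prob_simplex" "row_stochastic V"
  shows "(\<Sum>ys\<in>words n. seq_prob p V ys) = 1"
  using vector_matrix_mult_prob_simplex[OF assms]
  by (simp add: seq_prob_def sum_words_prod_list_map prob_simplex_def)

lemma seq_prob_mult_channel:
  "seq_prob p (V ** V') zs
     = (\<Sum>ys\<in>words (length zs). seq_prob p V ys * channel_kernel V' ys zs)"
proof -
  have "seq_prob p V ys * channel_kernel V' ys zs
      = prod_list (map2 (\<lambda>z y. (p v* V)$y * V'$y$z) zs ys)" if "length ys = length zs" for ys
  proof -
    have "map (\<lambda>y. (p v* V)$y) ys = map2 (\<lambda>y z. (p v* V)$y) ys zs"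
      using that by (induction ys zs rule: list_induct2) auto
    then show ?thesis
      by (simp add: seq_prob_def channel_kernel_def prod_list_map2_mult map2_flip[of _ ys zs])
  qed
  then have "(\<Sum>ys\<in>words (length zs). seq_prob p V ys * channel_kernel V' ys zs)
      = (\<Sum>ys\<in>words (length zs). prod_list (map2 (\<lambda>z y. (p v* V)$y * V'$y$z) zs ys))"
    by (intro sum.cong) auto
  also have "\<dots> = prod_list (map (\<lambda>z. \<Sum>y\<in>UNIV. (p v* V)$y * V'$y$z) zs)"
    by (rule sum_words_prod_list_map2)
  also have "(\<lambda>z. \<Sum>y\<in>UNIV. (p v* V)$y * V'$y$z) = (\<lambda>z. (p v* (V ** V'))$z)"
    unfolding vector_matrix_mul_assoc[symmetric] by (simp add: vector_matrix_mult_def)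
  also have "prod_list (map (\<lambda>z. (p v* (V ** V'))$z) zs) = seq_prob p (V ** V') zs"
    by (simp add: seq_prob_def)
  finally show ?thesis ..
qed

lemma empirical_vector_matrix_mult_nth:
  "(empirical ys v* N) $ k = sum_list (map (\<lambda>y. N$y$k) ys) / length ys"
proof -
  have "sum_list (map (\<lambda>y. N$y$k) ys) = (\<Sum>i\<in>UNIV. real (count_list ys i) * N$i$k)"
  proof (induction ys)
    case (Cons y ys)
    have "(\<Sum>i\<in>UNIV. real (count_list (y # ys) i) * N$i$k)
        = (\<Sum>i\<in>UNIV. real (count_list ys i) * N$i$k + (if y = i then N$i$k else 0))"
      by (intro sum.cong) (auto simp: algebra_simps)
    then show ?case by (simp add: sum.distrib Cons)
  qed simp
  then show ?thesis by (simp add: vector_matrix_mult_def empirical_def sum_divide_distrib)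
qed

lemma sum_empirical_vector_matrix_mult:
  assumes "ys \<noteq> []" "\<And>y. (\<Sum>k\<in>UNIV. N$y$k) = 1"
  shows "(\<Sum>k\<in>UNIV. (empirical ys v* N) $ k) = 1"
proof -
  have "(\<Sum>k\<in>UNIV. sum_list (map (\<lambda>y. N$y$k) ys)) = sum_list (map (\<lambda>y. \<Sum>k\<in>UNIV. N$y$k) ys)"
    by (induction ys) (simp_all add: sum.distrib)
  then show ?thesis
    using assms by (simp add: empirical_vector_matrix_mult_nth sum_list_triv flip: sum_divide_distrib)
qed

lemma abs_empirical_vector_matrix_mult_le:
  assumes "\<And>y. \<bar>N$y$k\<bar> \<le> B" "0 \<le> B"
  shows "\<bar>(empirical ys v* N) $ k\<bar> \<le> B"
proof -
  have "\<bar>sum_list (map (\<lambda>y. N$y$k) ys)\<bar> \<le> sum_list (map (\<lambda>y. B) ys)"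
    using sum_list_abs[of "map (\<lambda>y. N$y$k) ys"] sum_list_mono[of ys "\<lambda>y. \<bar>N$y$k\<bar>" "\<lambda>y. B"] assms
    by (simp add: o_def)
  then show ?thesis
    using assms by (cases "ys = []") (auto simp: empirical_vector_matrix_mult_nth sum_list_triv
        abs_divide divide_le_eq mult.commute)
qed

lemma empirical_diff_le_iff:
  fixes \<sigma> d :: real
  assumes "ys \<noteq> []" "length zs = length ys"
  shows "\<sigma> * sum_list (map (\<lambda>z. N'$z$k) zs) \<le> \<sigma> * sum_list (map (\<lambda>y. N$y$k) ys) - d * length ys
     \<longleftrightarrow> \<sigma> * ((empirical zs v* N') $ k - (empirical ys v* N) $ k) \<le> - d"
proof -
  have "0 < real (length ys)" using assms(1) by simp
  then have "\<sigma> * ((empirical zs v* N') $ k - (empirical ys v* N) $ k) \<le> - d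
      \<longleftrightarrow> length ys * (\<sigma> * ((empirical zs v* N') $ k - (empirical ys v* N) $ k)) \<le> length ys * (- d)"
    by (simp only: mult_le_cancel_left_pos)
  also have "\<dots> \<longleftrightarrow> \<sigma> * sum_list (map (\<lambda>z. N'$z$k) zs) \<le> \<sigma> * sum_list (map (\<lambda>y. N$y$k) ys) - d * length ys"
    using assms by (simp add: empirical_vector_matrix_mult_nth algebra_simps)
  finally show ?thesis ..
qed

lemma prod_list_map2_scaled_le:
  fixes T V :: "'a \<Rightarrow> 'b \<Rightarrow> real"
  assumes "length xs = length ys" and TV: "\<And>x y. \<rho> * T x y \<le> V x y"
    and T: "\<And>x y. 0 \<le> T x y" and \<rho>: "0 \<le> \<rho>"
  shows "\<rho> ^ length xs * prod_list (map2 T xs ys) \<le> prod_list (map2 V xs ys)"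
  using assms(1)
proof (induction xs ys rule: list_induct2)
  case (Cons x xs y ys)
  have "0 \<le> prod_list (map2 T xs ys)" by (intro prod_list_nonneg) (auto simp: T)
  moreover have "0 \<le> \<rho> * T x y" using T \<rho> by simp
  ultimately have "(\<rho> * T x y) * (\<rho> ^ length xs * prod_list (map2 T xs ys))
      \<le> V x y * prod_list (map2 V xs ys)"
    using Cons.IH TV[of x y] \<rho> by (intro mult_mono) auto
  then show ?case by (simp add: algebra_simps)
qed simp

definition tilt_row :: "real^'k^'k \<Rightarrow> 'k \<Rightarrow> 'k \<Rightarrow> real \<Rightarrow> real^'k^'k" where
  "tilt_row V i j \<tau> = (\<chi> y z. if y = i then (1 - \<tau>) * V$y$z + (if z = j then \<tau> else 0) else V$y$z)"

lemma row_stochastic_tilt_row: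
  assumes "row_stochastic V" "0 \<le> \<tau>" "\<tau> \<le> 1"
  shows "row_stochastic (tilt_row V i j \<tau>)"
proof -
  have "(\<Sum>z\<in>UNIV. tilt_row V i j \<tau> $ y $ z) = 1" for y
  proof (cases "y = i")
    case True
    then have "(\<Sum>z\<in>UNIV. tilt_row V i j \<tau> $ y $ z)
        = (1 - \<tau>) * (\<Sum>z\<in>UNIV. V$y$z) + (\<Sum>z\<in>UNIV. if z = j then \<tau> else 0)"
      by (simp add: tilt_row_def sum.distrib sum_distrib_left)
    then show ?thesis using assms(1) by (simp add: row_stochastic_def)
  qed (use assms(1) in \<open>simp add: tilt_row_def row_stochastic_def\<close>)
  then show ?thesis using assms by (auto simp: row_stochastic_def tilt_row_def)
qed

lemma tilt_row_mean:
  fixes c :: "'k::finite \<Rightarrow> real"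
  shows "(\<Sum>z\<in>UNIV. tilt_row V i j \<tau> $ y $ z * c z)
       = (\<Sum>z\<in>UNIV. V$y$z * c z) - (if y = i then \<tau> * ((\<Sum>z\<in>UNIV. V$i$z * c z) - c j) else 0)"
proof (cases "y = i")
  case True
  have "(\<Sum>z\<in>UNIV. tilt_row V i j \<tau> $ y $ z * c z)
      = (\<Sum>z\<in>UNIV. (1 - \<tau>) * (V$i$z * c z) + (if z = j then \<tau> * c j else 0))"
    by (intro sum.cong) (auto simp: tilt_row_def True algebra_simps)
  also have "\<dots> = (1 - \<tau>) * (\<Sum>z\<in>UNIV. V$i$z * c z) + \<tau> * c j"
    by (simp add: sum.distrib sum_distrib_left)
  finally show ?thesis using True by (simp add: algebra_simps)
qed (simp add: tilt_row_def)

lemma scaled_tilt_row_le: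
  assumes V: "row_stochastic V" "0 < V$i$j" and \<tau>: "0 < \<tau>" "\<tau> \<le> 1"
    and \<rho>: "0 \<le> \<rho>" "\<rho> \<le> V$i$j / (V$i$j + \<tau>)"
  shows "\<rho> * tilt_row V i j \<tau> $ y $ z \<le> V$y$z"
proof -
  have V0: "0 \<le> V$y$z" using V(1) by (simp add: row_stochastic_def)
  have \<rho>1: "\<rho> \<le> 1" using \<rho>(2) V(2) \<tau> by (smt (verit) divide_le_eq_1_pos)
  consider "y \<noteq> i" | "y = i" "z \<noteq> j" | "y = i" "z = j" by blast
  then show ?thesis
  proof cases
    case 1 then show ?thesis using \<rho>1 \<rho>(1) V0 by (simp add: tilt_row_def mult_left_le_one_le)
  next
    case 2
    have "\<rho> * ((1 - \<tau>) * V$y$z) \<le> 1 * (1 * V$y$z)"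
      using \<rho>1 \<rho>(1) \<tau> V0 by (intro mult_mono) auto
    then show ?thesis using 2 by (simp add: tilt_row_def)
  next
    case 3
    have "\<rho> * ((1 - \<tau>) * V$i$j + \<tau>) \<le> \<rho> * (V$i$j + \<tau>)"
      using \<rho>(1) \<tau> V(2) by (intro mult_left_mono) (auto simp: algebra_simps)
    also have "\<dots> \<le> V$i$j" using \<rho> V(2) \<tau> by (simp add: le_divide_eq)
    finally show ?thesis using 3 by (simp add: tilt_row_def)
  qed
qed

lemma channel_deviation_le:
  fixes T :: "real^'k^'k" and c :: "'k \<Rightarrow> real" and B \<delta> :: real
  assumes T: "row_stochastic T" and c: "\<And>z. \<bar>c z\<bar> \<le> B" and B: "0 < B" and \<delta>: "0 < \<delta>"
  shows "(\<Sum>zs\<in>words (length ys).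
            if \<delta> * length ys \<le> sum_list (map c zs) - (\<Sum>y\<leftarrow>ys. \<Sum>z\<in>UNIV. T$y$z * c z)
            then channel_kernel T ys zs else 0)
         \<le> exp (- chernoff_rate \<delta> (2 * B) * length ys)"
proof -
  have T0: "\<And>y z. 0 \<le> T$y$z" and T1: "\<And>y. (\<Sum>z\<in>UNIV. T$y$z) = 1"
    using T by (auto simp: row_stochastic_def)
  define \<mu> where "\<mu> y = (\<Sum>z\<in>UNIV. T$y$z * c z)" for y
  have \<mu>: "\<bar>\<mu> y\<bar> \<le> B" for y
  proof -
    have "\<bar>\<mu> y\<bar> \<le> (\<Sum>z\<in>UNIV. T$y$z * B)"
      unfolding \<mu>_def using c T0
      by (intro order_trans[OF sum_abs] sum_mono) (simp add: abs_mult mult_left_mono)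
    then show ?thesis by (simp add: T1 flip: sum_distrib_right)
  qed
  have "sum_list (map2 (\<lambda>y z. c z - \<mu> y) ys zs)
      = sum_list (map c zs) - (\<Sum>y\<leftarrow>ys. \<Sum>z\<in>UNIV. T$y$z * c z)"
    if "length zs = length ys" for zs
    using that[symmetric] by (induction ys zs rule: list_induct2) (auto simp: \<mu>_def)
  then have "(\<Sum>zs\<in>words (length ys).
            if \<delta> * length ys \<le> sum_list (map c zs) - (\<Sum>y\<leftarrow>ys. \<Sum>z\<in>UNIV. T$y$z * c z)
            then channel_kernel T ys zs else 0)
      = (\<Sum>zs\<in>words (length ys). if \<delta> * length ys \<le> sum_list (map2 (\<lambda>y z. c z - \<mu> y) ys zs)
            then prod_list (map2 (\<lambda>y z. T$y$z) ys zs) else 0)"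
    by (intro sum.cong) (auto simp: channel_kernel_def)
  also have "\<dots> \<le> exp (- chernoff_rate \<delta> (2 * B) * length ys)"
  proof (rule chernoff_product_kernel)
    show "(\<Sum>z\<in>UNIV. T$y$z * (c z - \<mu> y)) = 0" for y
      by (simp add: right_diff_distrib sum_subtractf T1 \<mu>_def flip: sum_distrib_right)
    show "\<bar>c z - \<mu> y\<bar> \<le> 2 * B" for y z
      using c[of z] \<mu>[of y] abs_triangle_ineq4[of "c z" "\<mu> y"] by simp
  qed (use T0 T1 B \<delta> in auto)
  finally show ?thesis .
qed

text \<open>Change of measure: under the tilted channel the sum of \<open>c\<close> over the output drifts by
  \<open>-\<tau> (\<mu> i - c j)\<close> per occurrence of \<open>i\<close>, and the tilted channel is at most \<open>1/\<rho>\<close> times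
  \<open>V\<close> letterwise.\<close>
lemma channel_prob_sum_below_drift:
  fixes V :: "real^'k^'k" and c :: "'k \<Rightarrow> real" and \<tau> \<rho> B \<delta> :: real
  assumes V: "row_stochastic V" "0 < V$i$j" and \<tau>: "0 < \<tau>" "\<tau> \<le> 1"
    and \<rho>: "0 \<le> \<rho>" "\<rho> \<le> V$i$j / (V$i$j + \<tau>)"
    and c: "\<And>y. \<bar>c y\<bar> \<le> B" and B: "0 < B" and \<delta>: "0 < \<delta>"
  defines "\<mu> \<equiv> \<lambda>y. \<Sum>z\<in>UNIV. V$y$z * c z"
  shows "\<rho> ^ length ys * (1 - exp (- chernoff_rate \<delta> (2 * B) * length ys))
     \<le> (\<Sum>zs\<in>words (length ys).
           if sum_list (map c zs) < sum_list (map \<mu> ys) - \<tau> * (\<mu> i - c j) * count_list ys i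
                                    + \<delta> * length ys
           then channel_kernel V ys zs else 0)"
proof -
  define T where "T = tilt_row V i j \<tau>"
  have T: "row_stochastic T" using row_stochastic_tilt_row[OF V(1)] \<tau> by (simp add: T_def)
  have T_mean: "(\<Sum>z\<in>UNIV. T$y$z * c z) = \<mu> y - (if y = i then \<tau> * (\<mu> i - c j) else 0)" for y
    by (simp add: T_def tilt_row_mean \<mu>_def)
  have "(\<Sum>y\<leftarrow>ys. \<Sum>z\<in>UNIV. T$y$z * c z) = (\<Sum>y\<leftarrow>ys. \<mu> y - (if y = i then \<tau> * (\<mu> i - c j) else 0))"
    by (simp only: T_mean)
  also have "\<dots> = sum_list (map \<mu> ys) - \<tau> * (\<mu> i - c j) * count_list ys i"
    by (induction ys) (auto simp: algebra_simps)
  finally have "\<rho> ^ length ys * (1 - exp (- chernoff_rate \<delta> (2 * B) * length ys))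
      \<le> \<rho> ^ length ys * (\<Sum>zs\<in>words (length ys). channel_kernel T ys zs
          - (if \<delta> * length ys \<le> sum_list (map c zs)
                  - (sum_list (map \<mu> ys) - \<tau> * (\<mu> i - c j) * count_list ys i)
             then channel_kernel T ys zs else 0))"
    using channel_deviation_le[OF T, of c, OF c B \<delta>, of ys] \<rho>(1) sum_channel_kernel[OF T, of ys]
    by (intro mult_left_mono) (simp_all add: sum_subtractf)
  also have "\<dots> \<le> (\<Sum>zs\<in>words (length ys).
           if sum_list (map c zs) < sum_list (map \<mu> ys) - \<tau> * (\<mu> i - c j) * count_list ys i
                                    + \<delta> * length ys
           then channel_kernel V ys zs else 0)"
    unfolding sum_distrib_left
  proof (intro sum_mono)
    fix zs :: "'k list" assume "zs \<in> words (length ys)"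
    then have "\<rho> ^ length ys * channel_kernel T ys zs \<le> channel_kernel V ys zs"
      unfolding channel_kernel_def T_def using V \<tau> \<rho> T
      by (intro prod_list_map2_scaled_le scaled_tilt_row_le) (auto simp: T_def row_stochastic_def)
    then show "\<rho> ^ length ys * (channel_kernel T ys zs - (if \<delta> * length ys \<le> sum_list (map c zs)
            - (sum_list (map \<mu> ys) - \<tau> * (\<mu> i - c j) * count_list ys i)
          then channel_kernel T ys zs else 0))
        \<le> (if sum_list (map c zs) < sum_list (map \<mu> ys) - \<tau> * (\<mu> i - c j) * count_list ys i
                                    + \<delta> * length ys then channel_kernel V ys zs else 0)"
      using channel_kernel_nonneg[OF V(1)] by auto
  qed
  finally show ?thesis .
qed

lemma channel_prob_sum_le_shifted:
  fixes V :: "real^'k^'k" and c :: "'k \<Rightarrow> real" and \<tau> \<rho> B \<delta> :: real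
  assumes V: "row_stochastic V" "0 < V$i$j" and \<tau>: "0 < \<tau>" "\<tau> \<le> 1"
    and \<rho>: "0 \<le> \<rho>" "\<rho> \<le> V$i$j / (V$i$j + \<tau>)"
    and c: "\<And>y. \<bar>c y\<bar> \<le> B" and B: "0 < B" and \<delta>: "0 < \<delta>"
    and small: "exp (- chernoff_rate \<delta> (2 * B) * length ys) \<le> 1 / 2"
    and drift: "4 * \<delta> * length ys \<le> \<tau> * ((\<Sum>z\<in>UNIV. V$i$z * c z) - c j) * count_list ys i"
  shows "\<rho> ^ length ys / 2 \<le> (\<Sum>zs\<in>words (length ys).
           if sum_list (map c zs) \<le> (\<Sum>y\<leftarrow>ys. \<Sum>z\<in>UNIV. V$y$z * c z) - 3 * \<delta> * length ys
           then channel_kernel V ys zs else 0)"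
proof -
  have "\<rho> ^ length ys * (1 / 2) \<le> \<rho> ^ length ys * (1 - exp (- chernoff_rate \<delta> (2 * B) * length ys))"
    using small \<rho>(1) by (intro mult_left_mono) auto
  then have "\<rho> ^ length ys / 2 \<le> \<rho> ^ length ys * (1 - exp (- chernoff_rate \<delta> (2 * B) * length ys))"
    by simp
  also have "\<dots> \<le> (\<Sum>zs\<in>words (length ys).
           if sum_list (map c zs) < (\<Sum>y\<leftarrow>ys. \<Sum>z\<in>UNIV. V$y$z * c z)
             - \<tau> * ((\<Sum>z\<in>UNIV. V$i$z * c z) - c j) * count_list ys i + \<delta> * length ys
           then channel_kernel V ys zs else 0)"
    by (rule channel_prob_sum_below_drift[OF V \<tau> \<rho> c B \<delta>])
  also have "\<dots> \<le> (\<Sum>zs\<in>words (length ys).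
           if sum_list (map c zs) \<le> (\<Sum>y\<leftarrow>ys. \<Sum>z\<in>UNIV. V$y$z * c z) - 3 * \<delta> * length ys
           then channel_kernel V ys zs else 0)"
    using drift channel_kernel_nonneg[OF V(1)] by (intro sum_mono) auto
  finally show ?thesis .
qed

section \<open>Degrading a channel\<close>

locale degraded_channel =
  fixes p :: "real^'k::finite" and W W' :: "real^'k^'k"
  assumes p: "p \<in> prob_simplex" "\<forall>k. 0 < p$k"
    and W: "row_stochastic W" "invertible W"
    and W': "row_stochastic W'" "invertible W'" "\<not> permutation_matrix W'"
begin

abbreviation "r \<equiv> p v* W"
abbreviation "q \<equiv> p v* (W ** W')"
abbreviation "inv_W \<equiv> matrix_inv W"
abbreviation "inv_WW' \<equiv> matrix_inv (W ** W')"
abbreviation "est ys \<equiv> empirical ys v* inv_W"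
abbreviation "est' zs \<equiv> empirical zs v* inv_WW'"

lemma WW': "row_stochastic (W ** W')" "invertible (W ** W')"
  using row_stochastic_mult[OF W(1) W'(1)] invertible_mult[OF W(2) W'(2)] by auto

lemma r_simplex: "r \<in> prob_simplex" and q_simplex: "q \<in> prob_simplex"
  using vector_matrix_mult_prob_simplex[OF p(1)] W(1) WW'(1) by auto

lemma r_mult_inv_W: "r v* inv_W = p"
  by (simp add: vector_matrix_mul_assoc matrix_inv_right[OF W(2)])

lemma q_mult_inv_WW': "q v* inv_WW' = p"
  by (simp add: vector_matrix_mul_assoc matrix_inv_right[OF WW'(2)])

lemma W'_mult_inv_WW': "W' ** inv_WW' = inv_W"
proof -
  have "inv_W ** (W ** (W' ** inv_WW')) = inv_W"
    using matrix_inv_right[OF WW'(2)] by (simp add: matrix_mul_assoc)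
  then show ?thesis using matrix_inv_left[OF W(2)] by (simp add: matrix_mul_assoc)
qed

lemma W'_mult_inv_WW'_nth: "(\<Sum>z\<in>UNIV. W'$y$z * inv_WW'$z$k) = inv_W$y$k"
  using W'_mult_inv_WW' by (simp add: matrix_matrix_mult_def vec_eq_iff)

definition entry_bound :: real where
  "entry_bound = 1 + (\<Sum>y\<in>UNIV. \<Sum>k\<in>UNIV. \<bar>inv_W$y$k\<bar> + \<bar>inv_WW'$y$k\<bar>)"

lemma entry_bound: "\<bar>inv_W$y$k\<bar> \<le> entry_bound" "\<bar>inv_WW'$y$k\<bar> \<le> entry_bound" "1 \<le> entry_bound"
proof -
  have "\<bar>inv_W$y$k\<bar> + \<bar>inv_WW'$y$k\<bar> \<le> (\<Sum>k\<in>UNIV. \<bar>inv_W$y$k\<bar> + \<bar>inv_WW'$y$k\<bar>)"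
    by (rule member_le_sum) auto
  also have "\<dots> \<le> (\<Sum>y\<in>UNIV. \<Sum>k\<in>UNIV. \<bar>inv_W$y$k\<bar> + \<bar>inv_WW'$y$k\<bar>)"
    by (rule member_le_sum) (auto intro: sum_nonneg)
  finally show "\<bar>inv_W$y$k\<bar> \<le> entry_bound" "\<bar>inv_WW'$y$k\<bar> \<le> entry_bound"
    by (auto simp: entry_bound_def)
  show "1 \<le> entry_bound" by (auto simp: entry_bound_def intro!: sum_nonneg)
qed

definition \<eta> :: real where
  "\<eta> = Min (range (\<lambda>k. p$k)) / 2"

lemma \<eta>: "0 < \<eta>" "\<eta> \<le> p$k / 2"
  using p(2) by (auto simp: \<eta>_def)

definition atypical :: "real^'k^'k \<Rightarrow> 'k list \<Rightarrow> bool" where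
  "atypical N ys \<longleftrightarrow> (\<exists>k. \<eta> * length ys \<le> \<bar>sum_list (map (\<lambda>y. N$y$k) ys) - length ys * p$k\<bar>)"

lemma estimate_near_p:
  assumes "ys \<noteq> []" "\<not> atypical N ys"
  shows "\<bar>(empirical ys v* N) $ k - p$k\<bar> < \<eta>"
proof -
  have "\<bar>sum_list (map (\<lambda>y. N$y$k) ys) - length ys * p$k\<bar> < \<eta> * length ys"
    using assms(2) by (auto simp: atypical_def not_le)
  moreover have "(empirical ys v* N) $ k - p$k
      = (sum_list (map (\<lambda>y. N$y$k) ys) - length ys * p$k) / length ys"
    using assms(1) by (simp add: empirical_vector_matrix_mult_nth field_simps)
  ultimately show ?thesis using assms(1) by (simp add: abs_divide divide_less_eq)
qed

definition atypical_rate :: real where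
  "atypical_rate = chernoff_rate \<eta> (entry_bound + 1)"

lemma atypical_rate_pos: "0 < atypical_rate"
  using \<eta>(1) entry_bound(3) by (simp add: atypical_rate_def chernoff_rate_pos)

lemma prob_atypical_le:
  assumes Q: "Q \<in> prob_simplex" "Q v* N = p" and N: "\<And>y k. \<bar>N$y$k\<bar> \<le> entry_bound"
  shows "(\<Sum>ys\<in>words n. if atypical N ys then prod_list (map (\<lambda>y. Q$y) ys) else 0)
     \<le> 2 * CARD('k) * exp (- atypical_rate * n)"
proof -
  have "(\<Sum>ys\<in>words n. if atypical N ys then prod_list (map (\<lambda>y. Q$y) ys) else 0)
      = (\<Sum>ys\<in>words n. if \<exists>k. \<eta> * n \<le> \<bar>sum_list (map (\<lambda>y. N$y$k) ys) - n * p$k\<bar>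
           then prod_list (map (\<lambda>y. Q$y) ys) else 0)"
    by (intro sum.cong) (auto simp: atypical_def)
  also have "\<dots> \<le> 2 * CARD('k) * exp (- atypical_rate * n)"
    unfolding atypical_rate_def
  proof (rule iid_deviation_union_bound)
    show "(\<Sum>y\<in>UNIV. Q$y * N$y$k) = p$k" for k
      using Q(2) by (simp add: vector_matrix_mult_def vec_eq_iff)
    show "\<bar>N$y$k - p$k\<bar> \<le> entry_bound + 1" for y k
      using N[of y k] p(2) prob_simplex_le_1[OF p(1), of k] by (smt (verit))
  qed (use Q(1) \<eta>(1) entry_bound(3) in \<open>auto simp: prob_simplex_def\<close>)
  finally show ?thesis .
qed

text \<open>Some row \<open>i\<close> of \<open>W'\<close> charges two outputs whose rows of \<open>inv_WW'\<close> differ in a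
  coordinate \<open>k\<close>; as row \<open>i\<close> of \<open>W'\<close> averages the rows of \<open>inv_WW'\<close> into row \<open>i\<close> of
  \<open>inv_W\<close>, it charges both a smaller and a larger value of that coordinate.\<close>
lemma exists_spread_row:
  obtains i jm jM k where "0 < W'$i$jm" "0 < W'$i$jM"
    "inv_WW'$jm$k < inv_W$i$k" "inv_W$i$k < inv_WW'$jM$k"
proof -
  obtain i j1 j2 where j: "j1 \<noteq> j2" "0 < W'$i$j1" "0 < W'$i$j2"
    using row_stochastic_two_positive[OF W'] by blast
  obtain k where k: "inv_WW'$j1$k \<noteq> inv_WW'$j2$k"
    using invertible_rows_differ[OF invertible_matrix_inv[OF WW'(2)] j(1)] by blast
  have W'0: "\<And>j. 0 \<le> W'$i$j" and W'1: "(\<Sum>j\<in>UNIV. W'$i$j) = 1"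
    using W'(1) by (auto simp: row_stochastic_def)
  have side: "\<exists>j. 0 < W'$i$j \<and> \<sigma> * inv_WW'$j$k < \<sigma> * inv_W$i$k" if \<sigma>: "\<sigma> \<noteq> 0" for \<sigma> :: real
  proof (rule ccontr)
    assume "\<not> ?thesis"
    then have nonneg: "\<forall>j\<in>UNIV. 0 \<le> W'$i$j * (\<sigma> * inv_WW'$j$k - \<sigma> * inv_W$i$k)"
      using W'0 by (metis less_eq_real_def mult_eq_0_iff mult_nonneg_nonneg not_less diff_ge_0_iff_ge)
    have "(\<Sum>j\<in>UNIV. W'$i$j * (\<sigma> * inv_WW'$j$k - \<sigma> * inv_W$i$k))
        = \<sigma> * (\<Sum>j\<in>UNIV. W'$i$j * inv_WW'$j$k) - \<sigma> * inv_W$i$k * (\<Sum>j\<in>UNIV. W'$i$j)"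
      by (simp add: right_diff_distrib sum_subtractf sum_distrib_left sum_distrib_right algebra_simps)
    also have "\<dots> = 0" using W'_mult_inv_WW'_nth W'1 by simp
    finally have "\<forall>j\<in>UNIV. W'$i$j * (\<sigma> * inv_WW'$j$k - \<sigma> * inv_W$i$k) = 0"
      using nonneg by (simp add: sum_nonneg_eq_0_iff)
    then have "W'$i$j1 * (\<sigma> * (inv_WW'$j1$k - inv_W$i$k)) = 0"
      "W'$i$j2 * (\<sigma> * (inv_WW'$j2$k - inv_W$i$k)) = 0"
      by (simp_all add: right_diff_distrib)
    then have "inv_WW'$j1$k = inv_W$i$k" "inv_WW'$j2$k = inv_W$i$k"
      using j(2,3) \<sigma> by auto
    with k show False by simp
  qed
  show ?thesis
    using side[of 1] side[of "- 1"] that by auto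
qed

lemma sum_seq_prob_channel_kernel:
  "(\<Sum>ys\<in>words n. seq_prob p W ys * (\<Sum>zs\<in>words n. channel_kernel W' ys zs * F zs))
     = (\<Sum>zs\<in>words n. seq_prob p (W ** W') zs * F zs)"
proof -
  have "(\<Sum>ys\<in>words n. seq_prob p W ys * (\<Sum>zs\<in>words n. channel_kernel W' ys zs * F zs))
      = (\<Sum>zs\<in>words n. \<Sum>ys\<in>words n. seq_prob p W ys * channel_kernel W' ys zs * F zs)"
    by (subst sum.swap) (simp add: sum_distrib_left mult.assoc)
  also have "\<dots> = (\<Sum>zs\<in>words n. seq_prob p (W ** W') zs * F zs)"
    by (intro sum.cong refl) (simp add: seq_prob_mult_channel sum_distrib_right)
  finally show ?thesis .
qed

lemma conditional_mean_est':
  assumes "ys \<noteq> []"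
  shows "(\<Sum>zs\<in>words (length ys). channel_kernel W' ys zs * (est' zs)$k) = (est ys)$k"
proof -
  have "(\<Sum>zs\<in>words (length ys). channel_kernel W' ys zs * (est' zs)$k)
      = (\<Sum>zs\<in>words (length ys). channel_kernel W' ys zs * sum_list (map (\<lambda>z. inv_WW'$z$k) zs))
        / length ys"
    by (simp add: empirical_vector_matrix_mult_nth sum_divide_distrib)
  also have "\<dots> = (est ys)$k"
    by (simp add: sum_channel_kernel_sum_list[OF W'(1)] W'_mult_inv_WW'_nth
        empirical_vector_matrix_mult_nth)
  finally show ?thesis .
qed

lemma prob_estimate_deviation_le:
  assumes "0 < \<delta>"
  shows "(\<Sum>ys\<in>words n. if \<delta> * n \<le> \<bar>sum_list (map (\<lambda>y. inv_W$y$k) ys) - n * p$k\<bar>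
            then seq_prob p W ys else 0)
     \<le> 2 * exp (- chernoff_rate \<delta> (entry_bound + 1) * n)"
  unfolding seq_prob_def
proof (rule iid_deviation_two_sided)
  show "\<bar>inv_W$y$k - p$k\<bar> \<le> entry_bound + 1" for y
    using entry_bound(1)[of y k] p(2) prob_simplex_le_1[OF p(1), of k] by (smt (verit))
  show "(\<Sum>y\<in>UNIV. r$y * inv_W$y$k) = p$k"
    using r_mult_inv_W by (simp add: vector_matrix_mult_def vec_eq_iff)
qed (use r_simplex assms entry_bound(3) in \<open>auto simp: prob_simplex_def\<close>)

lemma prob_count_deviation_le:
  "(\<Sum>ys\<in>words n. if r$i / 2 * n \<le> \<bar>real (count_list ys i) - n * r$i\<bar> then seq_prob p W ys else 0)
     \<le> 2 * exp (- chernoff_rate (r$i / 2) 1 * n)"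
proof -
  have "sum_list (map (\<lambda>y. if y = i then 1 else 0) ys) = real (count_list ys i)" for ys
    by (induction ys) auto
  moreover have "(\<Sum>ys\<in>words n.
      if r$i / 2 * n \<le> \<bar>sum_list (map (\<lambda>y. if y = i then 1 else 0) ys) - n * r$i\<bar>
      then prod_list (map (\<lambda>y. r$y) ys) else 0) \<le> 2 * exp (- chernoff_rate (r$i / 2) 1 * n)"
    using r_simplex vector_matrix_mult_pos[OF W p(2), of i] prob_simplex_le_1[OF r_simplex, of i]
    by (intro iid_deviation_two_sided) (auto simp: prob_simplex_def if_distrib cong: if_cong)
  ultimately show ?thesis unfolding seq_prob_def by simp
qed

lemma prob_typical_ge:
  assumes \<delta>: "0 < \<delta>" and n: "n \<noteq> 0"
  shows "1 - 2 * exp (- chernoff_rate \<delta> (entry_bound + 1) * n)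
       - 2 * exp (- chernoff_rate (r$i / 2) 1 * n)
     \<le> (\<Sum>ys\<in>words n. if \<bar>(est ys)$k - p$k\<bar> < \<delta> \<and> n * r$i / 2 \<le> count_list ys i
            then seq_prob p W ys else 0)"
proof -
  have "(\<Sum>ys\<in>words n. seq_prob p W ys)
      \<le> (\<Sum>ys\<in>words n. if \<bar>(est ys)$k - p$k\<bar> < \<delta> \<and> n * r$i / 2 \<le> count_list ys i
            then seq_prob p W ys else 0)
        + (\<Sum>ys\<in>words n. if \<delta> * n \<le> \<bar>sum_list (map (\<lambda>y. inv_W$y$k) ys) - n * p$k\<bar>
            then seq_prob p W ys else 0)
        + (\<Sum>ys\<in>words n. if r$i / 2 * n \<le> \<bar>real (count_list ys i) - n * r$i\<bar>
            then seq_prob p W ys else 0)"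
    unfolding sum.distrib[symmetric]
  proof (intro sum_mono)
    fix ys :: "'k list" assume "ys \<in> words n"
    then show "seq_prob p W ys
        \<le> (if \<bar>(est ys)$k - p$k\<bar> < \<delta> \<and> n * r$i / 2 \<le> count_list ys i then seq_prob p W ys else 0)
          + (if \<delta> * n \<le> \<bar>sum_list (map (\<lambda>y. inv_W$y$k) ys) - n * p$k\<bar> then seq_prob p W ys else 0)
          + (if r$i / 2 * n \<le> \<bar>real (count_list ys i) - n * r$i\<bar> then seq_prob p W ys else 0)"
      using n seq_prob_nonneg[OF p(1) W(1), of ys]
      by (auto simp: empirical_vector_matrix_mult_nth abs_less_iff field_simps not_le)
  qed
  then show ?thesis
    using sum_seq_prob[OF p(1) W(1), of n] prob_estimate_deviation_le[OF \<delta>, of n k]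
      prob_count_deviation_le[of i n] by simp
qed

lemma prob_typical_eventually:
  assumes \<delta>: "0 < \<delta>"
  shows "\<forall>\<^sub>F n in sequentially. 1 / 2 \<le> (\<Sum>ys\<in>words n.
     if \<bar>(est ys)$k - p$k\<bar> < \<delta> \<and> n * r$i / 2 \<le> count_list ys i then seq_prob p W ys else 0)"
proof -
  have "0 < chernoff_rate \<delta> (entry_bound + 1)" "0 < chernoff_rate (r$i / 2) 1"
    using \<delta> entry_bound(3) vector_matrix_mult_pos[OF W p(2), of i] by (auto intro: chernoff_rate_pos)
  then have "\<forall>\<^sub>F n in sequentially. exp (- chernoff_rate \<delta> (entry_bound + 1) * n) < 1 / 8"
    "\<forall>\<^sub>F n in sequentially. exp (- chernoff_rate (r$i / 2) 1 * n) < 1 / 8"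
    by (intro eventually_exp_neg_less; simp)+
  then show ?thesis
    using eventually_gt_at_top[of 0]
  proof eventually_elim
    case (elim n)
    then show ?case using prob_typical_ge[OF \<delta>, of n i k] by simp
  qed
qed

lemma prob_coordinate_shift:
  fixes \<sigma> \<tau> \<rho> \<delta> :: real
  assumes \<sigma>: "\<bar>\<sigma>\<bar> = 1" and ys: "ys \<noteq> []" and j: "0 < W'$i$j"
    and \<tau>: "0 < \<tau>" "\<tau> \<le> 1" and \<rho>: "0 \<le> \<rho>" "\<rho> \<le> W'$i$j / (W'$i$j + \<tau>)" and \<delta>: "0 < \<delta>"
    and small: "exp (- chernoff_rate \<delta> (2 * entry_bound) * length ys) \<le> 1 / 2"
    and drift: "4 * \<delta> * length ys \<le> \<tau> * (\<sigma> * (inv_W$i$k - inv_WW'$j$k)) * count_list ys i"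
  shows "\<rho> ^ length ys / 2
     \<le> sum (channel_kernel W' ys) {zs \<in> words (length ys). \<sigma> * ((est' zs)$k - (est ys)$k) \<le> - 3 * \<delta>}"
proof -
  define c where "c = (\<lambda>z. \<sigma> * inv_WW'$z$k)"
  have mean: "(\<Sum>z\<in>UNIV. W'$y$z * c z) = \<sigma> * inv_W$y$k" for y
    by (simp add: c_def W'_mult_inv_WW'_nth mult.left_commute flip: sum_distrib_left)
  have "\<rho> ^ length ys / 2 \<le> (\<Sum>zs\<in>words (length ys).
      if sum_list (map c zs) \<le> (\<Sum>y\<leftarrow>ys. \<Sum>z\<in>UNIV. W'$y$z * c z) - 3 * \<delta> * length ys
      then channel_kernel W' ys zs else 0)"
  proof (rule channel_prob_sum_le_shifted[OF W'(1) j \<tau> \<rho> _ _ \<delta>])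
    show "\<bar>c z\<bar> \<le> entry_bound" for z using \<sigma> entry_bound(2) by (simp add: c_def abs_mult)
    show "4 * \<delta> * length ys \<le> \<tau> * ((\<Sum>z\<in>UNIV. W'$i$z * c z) - c j) * count_list ys i"
      using drift unfolding mean by (simp add: c_def algebra_simps)
  qed (use small entry_bound(3) in auto)
  also have "\<dots> = sum (channel_kernel W' ys)
      {zs \<in> words (length ys). \<sigma> * ((est' zs)$k - (est ys)$k) \<le> - 3 * \<delta>}"
  proof -
    have "sum_list (map c zs) \<le> (\<Sum>y\<leftarrow>ys. \<Sum>z\<in>UNIV. W'$y$z * c z) - 3 * \<delta> * length ys
        \<longleftrightarrow> \<sigma> * ((est' zs)$k - (est ys)$k) \<le> - 3 * \<delta>" if "length zs = length ys" for zs
      using empirical_diff_le_iff[OF ys that, of \<sigma> inv_WW' k inv_W "3 * \<delta>"] unfolding mean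
      by (simp add: c_def sum_list_const_mult)
    then have "(\<Sum>zs\<in>words (length ys).
        if sum_list (map c zs) \<le> (\<Sum>y\<leftarrow>ys. \<Sum>z\<in>UNIV. W'$y$z * c z) - 3 * \<delta> * length ys
        then channel_kernel W' ys zs else 0)
      = (\<Sum>zs\<in>words (length ys). if \<sigma> * ((est' zs)$k - (est ys)$k) \<le> - 3 * \<delta>
        then channel_kernel W' ys zs else 0)"
      by (intro sum.cong) auto
    then show ?thesis by (simp only: sum.inter_filter[OF finite_words])
  qed
  finally show ?thesis .
qed

lemma tilt_parameters:
  fixes c :: real
  assumes c: "0 < c"
  obtains i jm jM k \<tau> \<delta> where "0 < W'$i$jm" "0 < W'$i$jM" "0 < \<tau>" "\<tau> \<le> 1"
    "exp (- c) \<le> W'$i$jm / (W'$i$jm + \<tau>)" "exp (- c) \<le> W'$i$jM / (W'$i$jM + \<tau>)"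
    "0 < \<delta>" "\<delta> \<le> p$k / 4"
    "8 * \<delta> \<le> \<tau> * (inv_W$i$k - inv_WW'$jm$k) * r$i"
    "8 * \<delta> \<le> \<tau> * (inv_WW'$jM$k - inv_W$i$k) * r$i"
proof -
  obtain i jm jM k where j: "0 < W'$i$jm" "0 < W'$i$jM"
    and spread: "inv_WW'$jm$k < inv_W$i$k" "inv_W$i$k < inv_WW'$jM$k"
    using exists_spread_row by blast
  define d where "d = min (inv_W$i$k - inv_WW'$jm$k) (inv_WW'$jM$k - inv_W$i$k)"
  define w where "w = min (W'$i$jm) (W'$i$jM)"
  define \<tau> where "\<tau> = min 1 (w * (exp c - 1))"
  define \<delta> where "\<delta> = min (\<tau> * d * r$i / 8) (p$k / 4)"
  have d: "0 < d" using spread by (simp add: d_def)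
  have w: "0 < w" using j by (simp add: w_def)
  have \<tau>: "0 < \<tau>" "\<tau> \<le> 1" using w c by (auto simp: \<tau>_def)
  \<comment> \<open>\<open>\<tau>\<close> is small enough that mixing mass \<open>\<tau>\<close> into a row entry \<open>\<ge> w\<close> costs at most a
    factor \<open>exp c\<close> in likelihood.\<close>
  have \<rho>: "exp (- c) \<le> W'$i$j / (W'$i$j + \<tau>)" if "w \<le> W'$i$j" for j
  proof -
    have "\<tau> \<le> w * (exp c - 1)" by (simp add: \<tau>_def)
    also have "\<dots> \<le> W'$i$j * (exp c - 1)" using that c by (intro mult_right_mono) auto
    finally have "exp (- c) * (W'$i$j + \<tau>) \<le> W'$i$j" by (simp add: exp_minus field_simps)
    then show ?thesis using that w \<tau> by (simp add: le_divide_eq)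
  qed
  have r: "0 < r$i" by (rule vector_matrix_mult_pos[OF W p(2)])
  have \<delta>: "0 < \<delta>" "\<delta> \<le> p$k / 4" "8 * \<delta> \<le> \<tau> * d * r$i"
    using \<tau> d r p(2) by (auto simp: \<delta>_def)
  have "8 * \<delta> \<le> \<tau> * (inv_W$i$k - inv_WW'$jm$k) * r$i"
    "8 * \<delta> \<le> \<tau> * (inv_WW'$jM$k - inv_W$i$k) * r$i"
    using \<delta>(3) \<tau> r by (auto simp: d_def intro!: order_trans[OF \<delta>(3)] mult_right_mono mult_left_mono)
  with that[OF j \<tau>] \<rho> \<delta> show ?thesis by (simp add: w_def)
qed

end

section \<open>Separable losses\<close>

text \<open>\<open>\<psi> k\<close> is a convex extension of \<open>h k\<close> to the whole line that agrees with it near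
  \<open>p$k\<close>, where the estimators concentrate and the projection is the identity.\<close>
locale separable_loss = degraded_channel p W W'
  for p :: "real^'k::finite" and W W' :: "real^'k^'k" +
  fixes Proj :: "real^'k \<Rightarrow> real^'k" and g :: "real^'k \<Rightarrow> real^'k \<Rightarrow> real"
    and h \<psi> :: "'k \<Rightarrow> real \<Rightarrow> real"
  assumes Proj: "is_simplex_proj Proj"
    and g: "\<And>x. g x p = (\<Sum>k\<in>UNIV. h k (x$k))"
    and h_convex: "\<And>k. convex_on {0..} (h k)"
    and h_strict: "\<And>k. strictly_convex_across (p$k) (h k)"
    and \<psi>_convex: "\<And>k. convex_on UNIV (\<psi> k)"
    and \<psi>_eq_h: "\<And>k x. p$k / 2 \<le> x \<Longrightarrow> \<psi> k x = h k x"
begin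

definition proj_loss :: "real^'k \<Rightarrow> real" where
  "proj_loss x = g (Proj x) p"

definition ext_loss :: "real^'k \<Rightarrow> real" where
  "ext_loss x = (\<Sum>k\<in>UNIV. \<psi> k (x$k))"

lemma proj_loss_eq_ext_loss:
  assumes "(\<Sum>k\<in>UNIV. x$k) = 1" "\<And>k. \<bar>x$k - p$k\<bar> < \<eta>"
  shows "proj_loss x = ext_loss x"
proof -
  have x: "p$k / 2 \<le> x$k" for k using assms(2)[of k] \<eta>(2)[of k] by linarith
  have "0 \<le> x$k" for k using x[of k] p(2) by (metis less_eq_real_def half_gt_zero order_trans)
  then have "x \<in> prob_simplex" using assms(1) by (simp add: prob_simplex_def)
  then have "Proj x = x" using Proj by (simp add: is_simplex_proj_def)
  then show ?thesis by (simp add: proj_loss_def ext_loss_def g \<psi>_eq_h[OF x])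
qed

lemma proj_loss_ext_loss_diff_bounded:
  obtains C where "1 \<le> C"
    "\<And>x. (\<Sum>k\<in>UNIV. x$k) = 1 \<Longrightarrow> (\<And>k. \<bar>x$k\<bar> \<le> entry_bound) \<Longrightarrow> \<bar>proj_loss x - ext_loss x\<bar> \<le> C"
proof -
  have "\<exists>U. \<forall>x\<in>{0..1}. \<bar>h k x\<bar> \<le> U" for k
    using p(2) less_imp_le[of 0 "p$k"]
    by (intro convex_on_bounded_on_interval[OF h_convex, of 0 1 "p$k" 0 "p$k + 1"]) auto
  then obtain Uh where Uh: "\<And>k x. x \<in> {0..1} \<Longrightarrow> \<bar>h k x\<bar> \<le> Uh k" by metis
  have "\<exists>U. \<forall>x\<in>{- entry_bound..entry_bound}. \<bar>\<psi> k x\<bar> \<le> U" for k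
    by (intro convex_on_bounded_on_interval[OF \<psi>_convex, of _ _ 0 "- 1" 1]) auto
  then obtain U\<psi> where U\<psi>: "\<And>k x. x \<in> {- entry_bound..entry_bound} \<Longrightarrow> \<bar>\<psi> k x\<bar> \<le> U\<psi> k"
    by metis
  define C where "C = 1 + (\<Sum>k\<in>UNIV. Uh k + U\<psi> k)"
  have "0 \<le> Uh k + U\<psi> k" for k using Uh[of 0 k] U\<psi>[of 0 k] entry_bound(3) by fastforce
  then have "1 \<le> C" by (simp add: C_def sum_nonneg)
  moreover have "\<bar>proj_loss x - ext_loss x\<bar> \<le> C"
    if x: "(\<Sum>k\<in>UNIV. x$k) = 1" "\<And>k. \<bar>x$k\<bar> \<le> entry_bound" for x
  proof -
    have "Proj x \<in> prob_simplex" using Proj x(1) by (simp add: is_simplex_proj_def)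
    then have "Proj x $ k \<in> {0..1}" for k
      using prob_simplex_le_1 by (auto simp: prob_simplex_def)
    then have "\<bar>proj_loss x\<bar> \<le> (\<Sum>k\<in>UNIV. Uh k)"
      unfolding proj_loss_def g by (intro order_trans[OF sum_abs] sum_mono Uh)
    moreover have "\<bar>ext_loss x\<bar> \<le> (\<Sum>k\<in>UNIV. U\<psi> k)"
    proof (unfold ext_loss_def, intro order_trans[OF sum_abs] sum_mono U\<psi>)
      show "x$k \<in> {- entry_bound..entry_bound}" for k using x(2)[of k] by (simp add: abs_le_iff)
    qed
    ultimately show ?thesis by (simp add: C_def sum.distrib)
  qed
  ultimately show ?thesis using that by blast
qed

lemma proj_loss_ext_loss_diff_atypical:
  obtains C where "1 \<le> C"
    "\<And>ys N. ys \<noteq> [] \<Longrightarrow> (\<And>y. (\<Sum>k\<in>UNIV. N$y$k) = 1) \<Longrightarrow> (\<And>y k. \<bar>N$y$k\<bar> \<le> entry_bound) \<Longrightarrow>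
       \<bar>proj_loss (empirical ys v* N) - ext_loss (empirical ys v* N)\<bar> \<le> (if atypical N ys then C else 0)"
proof -
  obtain C where C: "1 \<le> C" "\<And>x. (\<Sum>k\<in>UNIV. x$k) = 1 \<Longrightarrow> (\<And>k. \<bar>x$k\<bar> \<le> entry_bound) \<Longrightarrow>
      \<bar>proj_loss x - ext_loss x\<bar> \<le> C"
    using proj_loss_ext_loss_diff_bounded by blast
  have "\<bar>proj_loss (empirical ys v* N) - ext_loss (empirical ys v* N)\<bar> \<le> (if atypical N ys then C else 0)"
    if ys: "ys \<noteq> []" and N: "\<And>y. (\<Sum>k\<in>UNIV. N$y$k) = 1" "\<And>y k. \<bar>N$y$k\<bar> \<le> entry_bound" for ys N
  proof -
    have sum1: "(\<Sum>k\<in>UNIV. (empirical ys v* N) $ k) = 1"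
      using sum_empirical_vector_matrix_mult[OF ys] N(1) by blast
    show ?thesis
    proof (cases "atypical N ys")
      case True
      then show ?thesis
        using C(2)[OF sum1] abs_empirical_vector_matrix_mult_le[OF N(2)] entry_bound(3) by simp
    next
      case False
      then show ?thesis using proj_loss_eq_ext_loss[OF sum1 estimate_near_p[OF ys]] by simp
    qed
  qed
  then show ?thesis using that C(1) by blast
qed

lemma expected_loss_W:
  "expected_loss Proj g n p W = (\<Sum>ys\<in>words n. seq_prob p W ys * proj_loss (est ys))"
  by (simp add: expected_loss_def estimator_def proj_loss_def)

lemma expected_loss_WW':
  "expected_loss Proj g n p (W ** W')
     = (\<Sum>ys\<in>words n. seq_prob p W ys * (\<Sum>zs\<in>words n. channel_kernel W' ys zs * proj_loss (est' zs)))"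
  by (simp add: sum_seq_prob_channel_kernel expected_loss_def estimator_def proj_loss_def)

definition coordinate_gap :: "'k \<Rightarrow> 'k list \<Rightarrow> real" where
  "coordinate_gap k ys
     = (\<Sum>zs\<in>words (length ys). channel_kernel W' ys zs * \<psi> k ((est' zs)$k)) - \<psi> k ((est ys)$k)"

definition jensen_gap :: "'k list \<Rightarrow> real" where
  "jensen_gap ys
     = (\<Sum>zs\<in>words (length ys). channel_kernel W' ys zs * ext_loss (est' zs)) - ext_loss (est ys)"

lemma coordinate_gap_nonneg:
  assumes "ys \<noteq> []"
  shows "0 \<le> coordinate_gap k ys"
proof -
  have "\<psi> k (\<Sum>zs\<in>words (length ys). channel_kernel W' ys zs *\<^sub>R (est' zs)$k)
      \<le> (\<Sum>zs\<in>words (length ys). channel_kernel W' ys zs * \<psi> k ((est' zs)$k))"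
    by (rule convex_on_sum[OF finite_words _ \<psi>_convex])
      (auto simp: sum_channel_kernel[OF W'(1)] channel_kernel_nonneg[OF W'(1)])
  then show ?thesis using conditional_mean_est'[OF assms] by (simp add: coordinate_gap_def)
qed

lemma coordinate_gap_le_jensen_gap:
  assumes "ys \<noteq> []"
  shows "coordinate_gap k ys \<le> jensen_gap ys"
proof -
  have "jensen_gap ys = (\<Sum>k\<in>UNIV. coordinate_gap k ys)"
    by (simp add: jensen_gap_def coordinate_gap_def ext_loss_def sum_distrib_left sum_subtractf)
      (rule sum.swap)
  also have "\<dots> \<ge> coordinate_gap k ys"
    by (rule member_le_sum) (use coordinate_gap_nonneg[OF assms] in auto)
  finally show ?thesis .
qed

lemma expected_loss_W_le:
  assumes C: "0 \<le> C"
    and loss: "\<And>ys. ys \<in> words n \<Longrightarrow>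
      proj_loss (est ys) \<le> ext_loss (est ys) + (if atypical inv_W ys then C else 0)"
  shows "expected_loss Proj g n p W
     \<le> (\<Sum>ys\<in>words n. seq_prob p W ys * ext_loss (est ys))
        + 2 * C * CARD('k) * exp (- atypical_rate * n)"
proof -
  have "expected_loss Proj g n p W
      \<le> (\<Sum>ys\<in>words n. seq_prob p W ys * (ext_loss (est ys) + (if atypical inv_W ys then C else 0)))"
    unfolding expected_loss_W by (intro sum_mono mult_left_mono loss seq_prob_nonneg p(1) W(1))
  also have "\<dots> = (\<Sum>ys\<in>words n. seq_prob p W ys * ext_loss (est ys))
      + C * (\<Sum>ys\<in>words n. if atypical inv_W ys then prod_list (map (\<lambda>y. r$y) ys) else 0)"
    by (auto simp: sum.distrib sum_distrib_left seq_prob_def algebra_simps intro!: sum.cong)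
  also have "\<dots> \<le> (\<Sum>ys\<in>words n. seq_prob p W ys * ext_loss (est ys))
      + C * (2 * CARD('k) * exp (- atypical_rate * n))"
    using prob_atypical_le[OF r_simplex r_mult_inv_W entry_bound(1)] C by (simp add: mult_left_mono)
  finally show ?thesis by simp
qed

lemma expected_loss_WW'_ge:
  assumes C: "0 \<le> C"
    and loss: "\<And>zs. zs \<in> words n \<Longrightarrow>
      ext_loss (est' zs) - (if atypical inv_WW' zs then C else 0) \<le> proj_loss (est' zs)"
  shows "(\<Sum>ys\<in>words n. seq_prob p W ys * (\<Sum>zs\<in>words n. channel_kernel W' ys zs * ext_loss (est' zs)))
      - 2 * C * CARD('k) * exp (- atypical_rate * n) \<le> expected_loss Proj g n p (W ** W')"
proof -
  have "(\<Sum>zs\<in>words n. seq_prob p (W ** W') zs * ext_loss (est' zs))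
        - C * (2 * CARD('k) * exp (- atypical_rate * n))
      \<le> (\<Sum>zs\<in>words n. seq_prob p (W ** W') zs * ext_loss (est' zs))
        - C * (\<Sum>zs\<in>words n. if atypical inv_WW' zs then prod_list (map (\<lambda>y. q$y) zs) else 0)"
    using prob_atypical_le[OF q_simplex q_mult_inv_WW' entry_bound(2)] C by (simp add: mult_left_mono)
  also have "\<dots> = (\<Sum>zs\<in>words n.
      seq_prob p (W ** W') zs * (ext_loss (est' zs) - (if atypical inv_WW' zs then C else 0)))"
    by (auto simp: sum_subtractf sum_distrib_left seq_prob_def algebra_simps intro!: sum.cong)
  also have "\<dots> \<le> expected_loss Proj g n p (W ** W')"
    unfolding expected_loss_WW' sum_seq_prob_channel_kernel
    by (intro sum_mono mult_left_mono loss seq_prob_nonneg p(1) WW'(1))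
  finally show ?thesis by (simp add: sum_seq_prob_channel_kernel)
qed

lemma expected_loss_difference_ge:
  obtains C where "0 < C" "\<And>n. n \<noteq> 0 \<Longrightarrow>
    (\<Sum>ys\<in>words n. seq_prob p W ys * jensen_gap ys) - C * exp (- atypical_rate * n)
      \<le> expected_loss Proj g n p (W ** W') - expected_loss Proj g n p W"
proof -
  obtain C where C: "1 \<le> C" and est: "\<And>ys N. ys \<noteq> [] \<Longrightarrow>
      (\<And>y. (\<Sum>k\<in>UNIV. N$y$k) = 1) \<Longrightarrow> (\<And>y k. \<bar>N$y$k\<bar> \<le> entry_bound) \<Longrightarrow>
      \<bar>proj_loss (empirical ys v* N) - ext_loss (empirical ys v* N)\<bar> \<le> (if atypical N ys then C else 0)"
    using proj_loss_ext_loss_diff_atypical by blast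
  have "(\<Sum>ys\<in>words n. seq_prob p W ys * jensen_gap ys) - 4 * C * CARD('k) * exp (- atypical_rate * n)
     \<le> expected_loss Proj g n p (W ** W') - expected_loss Proj g n p W" if "n \<noteq> 0" for n
  proof -
    have ne: "xs \<noteq> []" if "xs \<in> words n" for xs :: "'k list" using that \<open>n \<noteq> 0\<close> by auto
    have "proj_loss (est ys) \<le> ext_loss (est ys) + (if atypical inv_W ys then C else 0)"
      if "ys \<in> words n" for ys
      using est[OF ne[OF that] matrix_inv_row_sum[OF W] entry_bound(1)] by (simp add: abs_le_iff)
    then have "expected_loss Proj g n p W
        \<le> (\<Sum>ys\<in>words n. seq_prob p W ys * ext_loss (est ys))
        + 2 * C * CARD('k) * exp (- atypical_rate * n)"
      using C by (intro expected_loss_W_le) auto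
    moreover have "ext_loss (est' zs) - (if atypical inv_WW' zs then C else 0) \<le> proj_loss (est' zs)"
      if "zs \<in> words n" for zs
      using est[OF ne[OF that] matrix_inv_row_sum[OF WW'] entry_bound(2)] by (simp add: abs_le_iff)
    then have "(\<Sum>ys\<in>words n.
          seq_prob p W ys * (\<Sum>zs\<in>words n. channel_kernel W' ys zs * ext_loss (est' zs)))
        - 2 * C * CARD('k) * exp (- atypical_rate * n) \<le> expected_loss Proj g n p (W ** W')"
      using C by (intro expected_loss_WW'_ge) auto
    ultimately show ?thesis by (simp add: jensen_gap_def right_diff_distrib sum_subtractf algebra_simps)
  qed
  then show ?thesis using that[of "4 * C * CARD('k)"] C by simp
qed

lemma chord_gap_pos:
  assumes ab: "p$k / 2 \<le> a" "a < p$k" "p$k < b" and m: "a < m" "m < b"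
  shows "0 < chord_gap (\<psi> k) a b m"
proof -
  define l where "l = (b - m) / (b - a)"
  have l: "0 < l" "l < 1" using ab m by (auto simp: l_def divide_simps)
  have "l * (b - a) = b - m" using ab by (simp add: l_def)
  then have m_eq: "m = l * a + (1 - l) * b" by (simp add: algebra_simps)
  have "1 - l = (m - a) / (b - a)" using ab by (simp add: l_def field_split_simps)
  then have "chord_gap (\<psi> k) a b m = l * \<psi> k a + (1 - l) * \<psi> k b - \<psi> k m"
    unfolding chord_gap_def by (simp add: l_def add_divide_distrib)
  also have "\<dots> = l * h k a + (1 - l) * h k b - h k (l * a + (1 - l) * b)"
    using ab m by (simp add: \<psi>_eq_h m_eq[symmetric])
  moreover have "0 \<le> a" using ab p(2) by (metis half_gt_zero less_le_not_le order_trans)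
  then have "h k (l * a + (1 - l) * b) < l * h k a + (1 - l) * h k b"
    using h_strict[of k] ab l unfolding strictly_convex_across_def by blast
  ultimately show ?thesis by simp
qed

lemma coordinate_gap_ge:
  fixes \<rho> \<delta> :: real
  assumes ys: "ys \<noteq> []" and \<delta>: "0 < \<delta>" "\<delta> \<le> p$k / 4" and near: "\<bar>(est ys)$k - p$k\<bar> < \<delta>"
    and \<rho>: "0 \<le> \<rho>"
    and below: "\<rho> ^ length ys / 2
      \<le> sum (channel_kernel W' ys) {zs \<in> words (length ys). (est' zs)$k \<le> (est ys)$k - 3 * \<delta>}"
    and above: "\<rho> ^ length ys / 2
      \<le> sum (channel_kernel W' ys) {zs \<in> words (length ys). (est ys)$k + 3 * \<delta> \<le> (est' zs)$k}"
  shows "\<rho> ^ length ys / 2 * min (chord_gap (\<psi> k) (p$k - 2 * \<delta>) (p$k + 2 * \<delta>) (p$k - \<delta>))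
                                 (chord_gap (\<psi> k) (p$k - 2 * \<delta>) (p$k + 2 * \<delta>) (p$k + \<delta>))
     \<le> coordinate_gap k ys"
proof -
  let ?a = "p$k - 2 * \<delta>" and ?b = "p$k + 2 * \<delta>" and ?m = "(est ys)$k"
  have K: "\<And>zs. 0 \<le> channel_kernel W' ys zs" by (rule channel_kernel_nonneg[OF W'(1)])
  have "\<rho> ^ length ys / 2 * chord_gap (\<psi> k) ?a ?b ?m \<le> coordinate_gap k ys"
    unfolding coordinate_gap_def
  proof (rule jensen_gap_two_sided[OF \<psi>_convex finite_words K])
    show "\<rho> ^ length ys / 2 \<le> sum (channel_kernel W' ys) {zs \<in> words (length ys). (est' zs)$k \<le> ?a}"
      using near by (intro order_trans[OF below] sum_mono2 K)
        (auto intro: rev_finite_subset[OF finite_words])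
    show "\<rho> ^ length ys / 2 \<le> sum (channel_kernel W' ys) {zs \<in> words (length ys). ?b \<le> (est' zs)$k}"
      using near by (intro order_trans[OF above] sum_mono2 K)
        (auto intro: rev_finite_subset[OF finite_words])
  qed (use sum_channel_kernel[OF W'(1)] conditional_mean_est'[OF ys] near \<rho> in auto)
  moreover have "min (chord_gap (\<psi> k) ?a ?b (p$k - \<delta>)) (chord_gap (\<psi> k) ?a ?b (p$k + \<delta>))
      \<le> chord_gap (\<psi> k) ?a ?b ?m"
    using near \<delta> by (intro chord_gap_ge_min[OF \<psi>_convex]) auto
  ultimately show ?thesis
    using \<rho> by (meson divide_nonneg_nonneg mult_left_mono order_trans zero_le_numeral zero_le_power)
qed

lemma jensen_gap_ge_typical:
  fixes \<tau> \<rho> \<delta> :: real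
  assumes j: "0 < W'$i$jm" "0 < W'$i$jM" and \<tau>: "0 < \<tau>" "\<tau> \<le> 1"
    and \<rho>: "0 \<le> \<rho>" "\<rho> \<le> W'$i$jm / (W'$i$jm + \<tau>)" "\<rho> \<le> W'$i$jM / (W'$i$jM + \<tau>)"
    and \<delta>: "0 < \<delta>" "\<delta> \<le> p$k / 4"
    and spread: "8 * \<delta> \<le> \<tau> * (inv_W$i$k - inv_WW'$jm$k) * r$i"
      "8 * \<delta> \<le> \<tau> * (inv_WW'$jM$k - inv_W$i$k) * r$i"
    and ys: "ys \<noteq> []" "\<bar>(est ys)$k - p$k\<bar> < \<delta>" "length ys * r$i / 2 \<le> count_list ys i"
      "exp (- chernoff_rate \<delta> (2 * entry_bound) * length ys) \<le> 1 / 2"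
  shows "\<rho> ^ length ys / 2 * min (chord_gap (\<psi> k) (p$k - 2 * \<delta>) (p$k + 2 * \<delta>) (p$k - \<delta>))
                                 (chord_gap (\<psi> k) (p$k - 2 * \<delta>) (p$k + 2 * \<delta>) (p$k + \<delta>))
     \<le> jensen_gap ys"
proof -
  have drift: "4 * \<delta> * length ys \<le> \<tau> * d * count_list ys i"
    if "8 * \<delta> \<le> \<tau> * d * r$i" for d
  proof -
    have "4 * \<delta> * length ys \<le> \<tau> * d * (length ys * r$i / 2)"
      using that mult_right_mono[OF that, of "length ys"] by (simp add: algebra_simps)
    also have "\<dots> \<le> \<tau> * d * count_list ys i"
    proof (rule mult_left_mono[OF ys(3)])
      have "0 < \<tau> * d * r$i" using that \<delta> by linarith
      moreover have "0 \<le> r$i" using r_simplex by (simp add: prob_simplex_def)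
      ultimately show "0 \<le> \<tau> * d" using mult_nonpos_nonneg[of "\<tau> * d" "r$i"] by linarith
    qed
    finally show ?thesis .
  qed
  have "\<rho> ^ length ys / 2
      \<le> sum (channel_kernel W' ys) {zs \<in> words (length ys). 1 * ((est' zs)$k - (est ys)$k) \<le> - 3 * \<delta>}"
    using drift[OF spread(1)] by (intro prob_coordinate_shift[OF _ ys(1) j(1) \<tau> \<rho>(1,2) \<delta>(1) ys(4)]) auto
  moreover have "\<rho> ^ length ys / 2
      \<le> sum (channel_kernel W' ys) {zs \<in> words (length ys). - 1 * ((est' zs)$k - (est ys)$k) \<le> - 3 * \<delta>}"
    using drift[OF spread(2)] by (intro prob_coordinate_shift[OF _ ys(1) j(2) \<tau> \<rho>(1,3) \<delta>(1) ys(4)])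
      (auto simp: algebra_simps)
  ultimately have "\<rho> ^ length ys / 2 * min (chord_gap (\<psi> k) (p$k - 2 * \<delta>) (p$k + 2 * \<delta>) (p$k - \<delta>))
                                 (chord_gap (\<psi> k) (p$k - 2 * \<delta>) (p$k + 2 * \<delta>) (p$k + \<delta>))
     \<le> coordinate_gap k ys"
    by (intro coordinate_gap_ge[OF ys(1) \<delta> ys(2) \<rho>(1)]) (simp_all add: algebra_simps)
  then show ?thesis using coordinate_gap_le_jensen_gap[OF ys(1), of k] by (rule order_trans)
qed

lemma expected_jensen_gap_ge_half:
  assumes n: "n \<noteq> 0" and \<gamma>: "0 \<le> \<gamma>"
    and gap: "\<And>ys. ys \<in> words n \<Longrightarrow> T ys \<Longrightarrow> \<gamma> \<le> jensen_gap ys"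
    and T: "1 / 2 \<le> (\<Sum>ys\<in>words n. if T ys then seq_prob p W ys else 0)"
  shows "\<gamma> / 2 \<le> (\<Sum>ys\<in>words n. seq_prob p W ys * jensen_gap ys)"
proof -
  have "\<gamma> / 2 = 1 / 2 * \<gamma>" by simp
  also have "\<dots> \<le> (\<Sum>ys\<in>words n. if T ys then seq_prob p W ys else 0) * \<gamma>"
    by (rule mult_right_mono[OF T \<gamma>])
  also have "\<dots> \<le> (\<Sum>ys\<in>words n. seq_prob p W ys * jensen_gap ys)"
    unfolding sum_distrib_right
  proof (intro sum_mono)
    fix ys :: "'k list" assume ys: "ys \<in> words n"
    then have "ys \<noteq> []" using n by auto
    then have J: "0 \<le> jensen_gap ys"
      using coordinate_gap_nonneg coordinate_gap_le_jensen_gap by (blast intro: order_trans)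
    have P: "0 \<le> seq_prob p W ys" by (rule seq_prob_nonneg[OF p(1) W(1)])
    show "(if T ys then seq_prob p W ys else 0) * \<gamma> \<le> seq_prob p W ys * jensen_gap ys"
    proof (cases "T ys")
      case True
      have "\<gamma> * seq_prob p W ys \<le> jensen_gap ys * seq_prob p W ys"
        using gap[OF ys True] P by (rule mult_right_mono)
      then show ?thesis using True by (simp add: mult.commute)
    qed (use J P in simp)
  qed
  finally show ?thesis .
qed

lemma expected_jensen_gap_subexponential:
  fixes c :: real
  assumes c: "0 < c"
  obtains J where "0 < J"
    "\<forall>\<^sub>F n in sequentially. J * exp (- c * n) \<le> (\<Sum>ys\<in>words n. seq_prob p W ys * jensen_gap ys)"
proof -
  obtain i jm jM k \<tau> \<delta> where j: "0 < W'$i$jm" "0 < W'$i$jM" and \<tau>: "0 < \<tau>" "\<tau> \<le> 1"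
    and \<rho>: "exp (- c) \<le> W'$i$jm / (W'$i$jm + \<tau>)" "exp (- c) \<le> W'$i$jM / (W'$i$jM + \<tau>)"
    and \<delta>: "0 < \<delta>" "\<delta> \<le> p$k / 4"
    and spread: "8 * \<delta> \<le> \<tau> * (inv_W$i$k - inv_WW'$jm$k) * r$i"
      "8 * \<delta> \<le> \<tau> * (inv_WW'$jM$k - inv_W$i$k) * r$i"
    by (rule tilt_parameters[OF c])
  define \<rho> where "\<rho> = exp (- c)"
  note \<rho> = \<rho>[folded \<rho>_def]
  have \<rho>0: "0 \<le> \<rho>" by (simp add: \<rho>_def)
  define J where "J = min (chord_gap (\<psi> k) (p$k - 2 * \<delta>) (p$k + 2 * \<delta>) (p$k - \<delta>))
                          (chord_gap (\<psi> k) (p$k - 2 * \<delta>) (p$k + 2 * \<delta>) (p$k + \<delta>))"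
  have J: "0 < J"
    unfolding J_def using \<delta> p(2) by (auto intro!: chord_gap_pos)
  have gap: "\<rho> ^ n / 2 * J \<le> jensen_gap ys"
    if "ys \<in> words n" "n \<noteq> 0" "\<bar>(est ys)$k - p$k\<bar> < \<delta> \<and> n * r$i / 2 \<le> count_list ys i"
      "exp (- chernoff_rate \<delta> (2 * entry_bound) * n) \<le> 1 / 2" for n ys
  proof -
    have "ys \<noteq> []" using that(1,2) by auto
    then show ?thesis
      using jensen_gap_ge_typical[OF j \<tau> \<rho>0 \<rho> \<delta> spread, of ys] that by (simp add: J_def)
  qed
  have "\<forall>\<^sub>F n in sequentially. exp (- chernoff_rate \<delta> (2 * entry_bound) * n) < 1 / 2"
    using \<delta> entry_bound(3) by (intro eventually_exp_neg_less chernoff_rate_pos) auto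
  then have "\<forall>\<^sub>F n in sequentially.
      J / 4 * exp (- c * n) \<le> (\<Sum>ys\<in>words n. seq_prob p W ys * jensen_gap ys)"
    using prob_typical_eventually[OF \<delta>(1), of k i] eventually_gt_at_top[of 0]
  proof eventually_elim
    case (elim n)
    have "\<rho> ^ n / 2 * J / 2 \<le> (\<Sum>ys\<in>words n. seq_prob p W ys * jensen_gap ys)"
      using elim J \<rho>0 by (intro expected_jensen_gap_ge_half gap) auto
    then show ?case by (simp add: \<rho>_def exp_of_nat_mult[symmetric] mult.commute)
  qed
  then show ?thesis using that[of "J / 4"] J by simp
qed

text \<open>The Jensen gap decays more slowly than \<open>exp (- atypical_rate * n / 2)\<close>, while the
  error made by replacing the losses with their convex extensions is of order
  \<open>exp (- atypical_rate * n)\<close>.\<close>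
theorem expected_loss_eventually_less:
  "\<forall>\<^sub>F n in sequentially. expected_loss Proj g n p W < expected_loss Proj g n p (W ** W')"
proof -
  define a where "a = atypical_rate / 2"
  have a: "0 < a" using atypical_rate_pos by (simp add: a_def)
  obtain C where C: "0 < C" "\<And>n. n \<noteq> 0 \<Longrightarrow>
    (\<Sum>ys\<in>words n. seq_prob p W ys * jensen_gap ys) - C * exp (- atypical_rate * n)
      \<le> expected_loss Proj g n p (W ** W') - expected_loss Proj g n p W"
    using expected_loss_difference_ge by blast
  obtain J where J: "0 < J"
    "\<forall>\<^sub>F n in sequentially. J * exp (- a * n) \<le> (\<Sum>ys\<in>words n. seq_prob p W ys * jensen_gap ys)"
    using expected_jensen_gap_subexponential[OF a] by blast
  have "\<forall>\<^sub>F n in sequentially. exp (- a * n) < J / C"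
    using J(1) C(1) by (intro eventually_exp_neg_less a) simp
  with J(2) eventually_gt_at_top[of 0] show ?thesis
  proof eventually_elim
    case (elim n)
    have "C * exp (- atypical_rate * n) = exp (- a * n) * (C * exp (- a * n))"
      by (simp add: a_def mult_ac flip: exp_add)
    also have "\<dots> < J * exp (- a * n)"
      using elim(3) C(1) by (simp add: field_simps)
    finally show ?case using elim(1,2) C(2)[of n] by simp
  qed
qed

end

theorem expected_loss_degraded_eventually_less:
  fixes p :: "real^'k::finite" and W W' :: "real^'k^'k"
    and g :: "real^'k \<Rightarrow> real^'k \<Rightarrow> real" and h :: "'k \<Rightarrow> real \<Rightarrow> real"
  assumes "p \<in> prob_simplex" "\<forall>k. 0 < p$k"
    and "row_stochastic W" "invertible W"
    and "row_stochastic W'" "invertible W'" "\<not> permutation_matrix W'"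
    and "is_simplex_proj Proj"
    and "\<And>x. g x p = (\<Sum>k\<in>UNIV. h k (x$k))"
    and h: "\<And>k. convex_on {0..} (h k)" "\<And>k. strictly_convex_across (p$k) (h k)"
  shows "\<forall>\<^sub>F n in sequentially. expected_loss Proj g n p W < expected_loss Proj g n p (W ** W')"
proof -
  have "\<forall>k. \<exists>\<phi>. convex_on UNIV \<phi> \<and> (\<forall>x\<ge>p$k / 2. \<phi> x = h k x)"
    using convex_on_extend_from_halfline[OF h(1)] assms(2) by (metis half_gt_zero)
  then obtain \<psi> where "\<And>k. convex_on UNIV (\<psi> k)" "\<And>k x. p$k / 2 \<le> x \<Longrightarrow> \<psi> k x = h k x"
    by metis
  then interpret separable_loss p W W' Proj g h \<psi>
    using assms by unfold_locales auto
  show ?thesis by (rule expected_loss_eventually_less)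
qed

theorem theorem5:
  fixes p :: "real ^ 'k::finite"
    and W W' :: "real ^ 'k ^ 'k"
    and Proj :: "real ^ 'k \<Rightarrow> real ^ 'k"
  assumes "CARD('k) \<ge> 2"
    and "p \<in> prob_simplex" and "\<forall>k. 0 < p $ k"
    and "row_stochastic W" and "invertible W"
    and "row_stochastic W'" and "invertible W'"
    and "\<not> permutation_matrix W'"
    and "is_simplex_proj Proj"
  shows "(\<forall>f. convex_on {0..} f \<and> f 1 = 0 \<and> strictly_convex_at_one f \<longrightarrow>
            (\<forall>\<^sub>F n in sequentially.
               expected_loss Proj (fdiv_loss f) n p (W ** W') > expected_loss Proj (fdiv_loss f) n p W))
       \<and> (\<forall>\<^sub>F n in sequentially.
               expected_loss Proj mse_loss n p (W ** W') > expected_loss Proj mse_loss n p W)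
       \<and> (\<forall>\<^sub>F n in sequentially.
               expected_loss Proj tv_loss n p (W ** W') > expected_loss Proj tv_loss n p W)"
proof (intro conjI allI impI)
  fix f :: "real \<Rightarrow> real"
  assume "convex_on {0..} f \<and> f 1 = 0 \<and> strictly_convex_at_one f"
  then show "\<forall>\<^sub>F n in sequentially.
      expected_loss Proj (fdiv_loss f) n p (W ** W') > expected_loss Proj (fdiv_loss f) n p W"
    using assms(3)
    by (intro expected_loss_degraded_eventually_less[OF assms(2-9),
          where h = "\<lambda>k x. p$k * f (x / p$k)"])
      (auto simp: fdiv_loss_def intro: convex_on_perspective strictly_convex_across_perspective)
next
  show "\<forall>\<^sub>F n in sequentially.
      expected_loss Proj mse_loss n p (W ** W') > expected_loss Proj mse_loss n p W"
    by (intro expected_loss_degraded_eventually_less[OF assms(2-9), where h = "\<lambda>k x. (x - p$k)\<^sup>2"])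
      (simp_all add: mse_loss_def convex_on_sq_dist strictly_convex_across_sq_dist)
next
  show "\<forall>\<^sub>F n in sequentially.
      expected_loss Proj tv_loss n p (W ** W') > expected_loss Proj tv_loss n p W"
    by (intro expected_loss_degraded_eventually_less[OF assms(2-9), where h = "\<lambda>k x. \<bar>x - p$k\<bar>"])
      (simp_all add: tv_loss_def convex_on_abs_dist strictly_convex_across_abs_dist)
qed

end
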